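(* Let $a\in(1,\infty)$ and $\gamma\in\mathbb C^{\mathbb Z}$ bounded with $q_2(\gamma)<\infty$. Then $D_\gamma\in C^2(A_a)$.
   Context: On $\ell^2(\mathbb Z)$: $Te_k=e_{k+1}$, $Xe_k=ke_k$, $D_\gamma e_k=\gamma_ke_k$. $(S\gamma)_k=\gamma_{k+1}$, $(\Delta\gamma)_k=\gamma_k-\gamma_{k+1}$; $q_0(\gamma)=\sup|\gamma_k|$, $q_{n+1}(\gamma)=q_n(\gamma)+\sup_k|k^{n+1}(\Delta^{n+1}\gamma)_k|$. $A_a$ is the self-adjoint closure on $\mathcal D(X)$ of $\frac12\sum_{m\ne0}a^{-|m|}(T^mX+XT^m)$. $B\in C^1(A)$ if $|\langle A\varphi,B\psi\rangle-\langle\varphi,BA\psi\rangle|\le C\|\varphi\|\|\psi\|$ on $\mathcal D(A)$, with $\mathrm{ad}_AB$ the associated bounded operator; $B\in C^2(A)$ if $B\in C^1(A)$ and $\mathrm{ad}_AB\in C^1(A)$. *)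

theory Defs
  imports "HOL-Analysis.Analysis"
begin

text \<open>Vectors of l2(Z) are modelled as functions int => complex that are square summable.
  The basis vector e_k is the indicator of k.\<close>

type_synonym vec = "int \<Rightarrow> complex"
type_synonym op = "vec \<Rightarrow> vec"

definition l2 :: "vec \<Rightarrow> bool" where
  "l2 f \<longleftrightarrow> (\<lambda>k. (cmod (f k))\<^sup>2) summable_on UNIV"

definition l2inner :: "vec \<Rightarrow> vec \<Rightarrow> complex" where
  "l2inner f g = infsum (\<lambda>k. cnj (f k) * g k) UNIV"

definition l2norm :: "vec \<Rightarrow> real" where
  "l2norm f = sqrt (infsum (\<lambda>k. (cmod (f k))\<^sup>2) UNIV)"

definition bounded_op :: "op \<Rightarrow> bool" where
  "bounded_op B \<longleftrightarrow>
     (\<forall>f. l2 f \<longrightarrow> l2 (B f)) \<and>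
     (\<forall>f g c. l2 f \<longrightarrow> l2 g \<longrightarrow> B (\<lambda>k. f k + c * g k) = (\<lambda>k. B f k + c * B g k)) \<and>
     (\<exists>C. \<forall>f. l2 f \<longrightarrow> l2norm (B f) \<le> C * l2norm f)"

text \<open>T e_k = e_(k+1), hence (T^m f)_k = f_(k-m) for all m in Z; X e_k = k e_k;
  D_gamma e_k = gamma_k e_k.\<close>
definition Tpow :: "int \<Rightarrow> op" where
  "Tpow m f = (\<lambda>k. f (k - m))"

definition Xop :: op where
  "Xop f = (\<lambda>k. of_int k * f k)"

definition Dop :: "vec \<Rightarrow> op" where
  "Dop \<gamma> f = (\<lambda>k. \<gamma> k * f k)"

definition domX :: "vec set" where
  "domX = {f. l2 f \<and> l2 (Xop f)}"

definition A0 :: "real \<Rightarrow> op" where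
  "A0 a f = (\<lambda>k. (1/2) * infsum (\<lambda>m. complex_of_real (a powr (- real_of_int \<bar>m\<bar>)) *
                 (Tpow m (Xop f) k + Xop (Tpow m f) k)) {m. m \<noteq> 0})"

text \<open>Graph of the closure A_a of A0 a restricted to D(X): closure in l2 x l2 of its graph.\<close>
definition graphA :: "real \<Rightarrow> (vec \<times> vec) set" where
  "graphA a = {(f, g). l2 f \<and> l2 g \<and>
     (\<exists>\<phi>. (\<forall>n. \<phi> n \<in> domX) \<and>
          (\<lambda>n. l2norm (\<lambda>k. \<phi> n k - f k)) \<longlonglongrightarrow> 0 \<and>
          (\<lambda>n. l2norm (\<lambda>k. A0 a (\<phi> n) k - g k)) \<longlonglongrightarrow> 0)}"

definition domA :: "real \<Rightarrow> vec set" where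
  "domA a = {f. \<exists>g. (f, g) \<in> graphA a}"

definition Aop :: "real \<Rightarrow> op" where
  "Aop a f = (THE g. (f, g) \<in> graphA a)"

definition C1 :: "op \<Rightarrow> vec set \<Rightarrow> op \<Rightarrow> bool" where
  "C1 A D B \<longleftrightarrow> bounded_op B \<and>
     (\<exists>C. \<forall>\<phi>\<in>D. \<forall>\<psi>\<in>D.
        cmod (l2inner (A \<phi>) (B \<psi>) - l2inner \<phi> (B (A \<psi>))) \<le> C * l2norm \<phi> * l2norm \<psi>)"

text \<open>ad_A B is the (unique, as D is dense) bounded operator K with
  <phi, K psi> = <A phi, B psi> - <phi, B A psi> on D.\<close>
definition is_adA :: "op \<Rightarrow> vec set \<Rightarrow> op \<Rightarrow> op \<Rightarrow> bool" where
  "is_adA A D B K \<longleftrightarrow> bounded_op K \<and>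
     (\<forall>\<phi>\<in>D. \<forall>\<psi>\<in>D. l2inner \<phi> (K \<psi>) = l2inner (A \<phi>) (B \<psi>) - l2inner \<phi> (B (A \<psi>)))"

definition C2 :: "op \<Rightarrow> vec set \<Rightarrow> op \<Rightarrow> bool" where
  "C2 A D B \<longleftrightarrow> C1 A D B \<and> (\<exists>K. is_adA A D B K \<and> C1 A D K)"

definition Delta :: "vec \<Rightarrow> vec" where
  "Delta \<gamma> = (\<lambda>k. \<gamma> k - \<gamma> (k + 1))"

fun q :: "nat \<Rightarrow> vec \<Rightarrow> ereal" where
  "q 0 \<gamma> = (SUP k. ereal (cmod (\<gamma> k)))"
| "q (Suc n) \<gamma> = q n \<gamma> + (SUP k. ereal (cmod (of_int k ^ Suc n * (Delta ^^ Suc n) \<gamma> k)))"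

end

theory Submission
  imports Defs
begin

text \<open>In the basis \<open>e\<^sub>k\<close>, \<open>A\<^sub>a\<close> has the matrix \<open>a\<^sup>-\<^sup>|\<^sup>j\<^sup>-\<^sup>k\<^sup>| (j + k)/2\<close> (\<open>j \<noteq> k\<close>), so
  \<open>[A\<^sub>a, D\<^sub>\<gamma>]\<close> has the matrix \<open>a\<^sup>-\<^sup>|\<^sup>j\<^sup>-\<^sup>k\<^sup>| (j + k)(\<gamma>\<^sub>k - \<gamma>\<^sub>j)/2\<close>. Summing \<open>\<Delta>\<gamma>\<close> between
  \<open>j\<close> and \<open>k\<close> shows \<open>|j + k| |\<gamma>\<^sub>k - \<gamma>\<^sub>j| \<le> C |j - k|\<close>, so the commutator matrix is dominated
  by a summable convolution kernel and is bounded by Young's inequality. The second commutator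
  has entries \<open>\<Sum>\<^sub>k a\<^sup>-\<^sup>|\<^sup>j\<^sup>-\<^sup>k\<^sup>|\<^sup>-\<^sup>|\<^sup>k\<^sup>-\<^sup>l\<^sup>| (j + k)(k + l)(\<gamma>\<^sub>j - 2\<gamma>\<^sub>k + \<gamma>\<^sub>l)/4\<close>; pairing \<open>k\<close> with
  its reflection \<open>j + l - k\<close> cancels the first-order Taylor terms of \<open>\<gamma>\<close>, and the decay of
  \<open>\<Delta>\<^sup>2\<gamma>\<close> bounds the rest by \<open>C (|j - k| + |k - l|)\<^sup>2\<close>, which the weights again turn into a
  summable kernel. Both identities are proved on \<open>D(X)\<close> and extended to \<open>D(A\<^sub>a)\<close> along
  graph-norm approximations.\<close>

section \<open>Square-summable sequences\<close>

lemma summable_on_diff: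
  fixes f g :: "'a \<Rightarrow> 'b::topological_ab_group_add"
  assumes "f summable_on A" "g summable_on A"
  shows "(\<lambda>x. f x - g x) summable_on A"
  using summable_on_add[OF assms(1) summable_on_uminus[THEN iffD2, OF assms(2)]] by simp

lemma infsum_diff:
  fixes f g :: "'a \<Rightarrow> 'b::{topological_ab_group_add,t2_space}"
  assumes "f summable_on A" "g summable_on A"
  shows "infsum (\<lambda>x. f x - g x) A = infsum f A - infsum g A"
  using infsum_add[OF assms(1) summable_on_uminus[THEN iffD2, OF assms(2)]] infsum_uminus[of g A]
  by simp

lemma infsum_mult_le_sqrt:
  fixes u v :: "'a \<Rightarrow> real"
  assumes u: "(\<lambda>x. (u x)\<^sup>2) summable_on A" and v: "(\<lambda>x. (v x)\<^sup>2) summable_on A"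
    and nonneg: "\<And>x. u x \<ge> 0" "\<And>x. v x \<ge> 0"
  shows "(\<lambda>x. u x * v x) summable_on A"
    and "infsum (\<lambda>x. u x * v x) A \<le> sqrt (infsum (\<lambda>x. (u x)\<^sup>2) A) * sqrt (infsum (\<lambda>x. (v x)\<^sup>2) A)"
proof -
  show uv: "(\<lambda>x. u x * v x) summable_on A"
  proof (rule summable_on_comparison_test[OF summable_on_add[OF u v]])
    show "u x * v x \<le> (u x)\<^sup>2 + (v x)\<^sup>2" for x
      using zero_le_power2[of "u x - v x"] mult_nonneg_nonneg[OF nonneg(1,2)[of x]]
      unfolding power2_diff by linarith
    show "0 \<le> u x * v x" for x using nonneg[of x] by simp
  qed
  show "infsum (\<lambda>x. u x * v x) A \<le> sqrt (infsum (\<lambda>x. (u x)\<^sup>2) A) * sqrt (infsum (\<lambda>x. (v x)\<^sup>2) A)"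
  proof (rule infsum_le_finite_sums[OF uv])
    fix F assume F: "finite F" "F \<subseteq> A"
    have "(\<Sum>x\<in>F. u x * v x) \<le> sqrt ((\<Sum>x\<in>F. (u x)\<^sup>2) * (\<Sum>x\<in>F. (v x)\<^sup>2))"
      by (rule real_le_rsqrt[OF Cauchy_Schwarz_ineq_sum])
    also have "\<dots> \<le> sqrt (infsum (\<lambda>x. (u x)\<^sup>2) A * infsum (\<lambda>x. (v x)\<^sup>2) A)"
      by (intro real_sqrt_le_mono mult_mono finite_sum_le_infsum u v F sum_nonneg infsum_nonneg)
         auto
    finally show "(\<Sum>x\<in>F. u x * v x) \<le> sqrt (infsum (\<lambda>x. (u x)\<^sup>2) A) * sqrt (infsum (\<lambda>x. (v x)\<^sup>2) A)"
      by (simp add: real_sqrt_mult)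
  qed
qed

lemma norm_add_square_le:
  fixes x y :: "'a::real_normed_vector"
  shows "(norm (x + y))\<^sup>2 \<le> (norm x)\<^sup>2 + 2 * (norm x * norm y) + (norm y)\<^sup>2"
proof -
  have "(norm (x + y))\<^sup>2 \<le> (norm x + norm y)\<^sup>2" by (intro power_mono norm_triangle_ineq) auto
  thus ?thesis by (simp add: power2_sum)
qed

lemma l2D: "l2 f \<Longrightarrow> (\<lambda>k. (cmod (f k))\<^sup>2) summable_on UNIV"
  by (simp add: l2_def)

lemma l2norm_nonneg: "l2norm f \<ge> 0"
  unfolding l2norm_def by (simp add: infsum_nonneg)

lemma l2norm_square: "(l2norm f)\<^sup>2 = infsum (\<lambda>k. (cmod (f k))\<^sup>2) UNIV"
  unfolding l2norm_def by (simp add: infsum_nonneg)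

lemma l2_dominated:
  assumes "l2 g" "\<And>k. cmod (f k) \<le> cmod (g k)"
  shows "l2 f"
  unfolding l2_def
  by (rule summable_on_comparison_test[OF l2D[OF assms(1)]]) (auto intro: power_mono assms(2))

lemma l2norm_mono:
  assumes "l2 g" "\<And>k. cmod (f k) \<le> cmod (g k)"
  shows "l2norm f \<le> l2norm g"
proof -
  have "infsum (\<lambda>k. (cmod (f k))\<^sup>2) UNIV \<le> infsum (\<lambda>k. (cmod (g k))\<^sup>2) UNIV"
    using l2_dominated[OF assms] by (intro infsum_mono l2D assms power_mono) auto
  thus ?thesis unfolding l2norm_def by simp
qed

lemma l2_norm_mult_summable:
  assumes "l2 f" "l2 g"
  shows "(\<lambda>k. cmod (f k) * cmod (g k)) summable_on UNIV"
  by (rule infsum_mult_le_sqrt(1)[of "\<lambda>k. cmod (f k)" _ "\<lambda>k. cmod (g k)"])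
     (use assms in \<open>auto simp: l2_def\<close>)

lemma l2_cauchy_schwarz:
  assumes "l2 f" "l2 g"
  shows "infsum (\<lambda>k. cmod (f k) * cmod (g k)) UNIV \<le> l2norm f * l2norm g"
  using infsum_mult_le_sqrt(2)[of "\<lambda>k. cmod (f k)" UNIV "\<lambda>k. cmod (g k)"] assms
  unfolding l2norm_def l2_def by simp

lemma l2_add:
  assumes "l2 f" "l2 g"
  shows "l2 (\<lambda>k. f k + g k)"
  unfolding l2_def
proof (rule summable_on_comparison_test)
  show "(\<lambda>k. (cmod (f k))\<^sup>2 + 2 * (cmod (f k) * cmod (g k)) + (cmod (g k))\<^sup>2) summable_on UNIV"
    by (intro summable_on_add summable_on_cmult_right l2D l2_norm_mult_summable assms)
  show "(cmod (f k + g k))\<^sup>2 \<le> (cmod (f k))\<^sup>2 + 2 * (cmod (f k) * cmod (g k)) + (cmod (g k))\<^sup>2"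
    for k by (rule norm_add_square_le)
qed simp

lemma l2_scale: "l2 f \<Longrightarrow> l2 (\<lambda>k. c * f k)"
  using summable_on_cmult_right[OF l2D, of f "(cmod c)\<^sup>2"]
  unfolding l2_def by (simp add: norm_mult power_mult_distrib)

lemma l2_diff: "l2 f \<Longrightarrow> l2 g \<Longrightarrow> l2 (\<lambda>k. f k - g k)"
  using l2_add[of f "\<lambda>k. -1 * g k"] l2_scale[of g "-1"] by simp

lemma l2_of_real_norm: "l2 f \<Longrightarrow> l2 (\<lambda>k. complex_of_real (cmod (f k)))"
  unfolding l2_def by simp

lemma norm_le_l2norm:
  assumes "l2 f"
  shows "cmod (f k) \<le> l2norm f"
proof -
  have "infsum (\<lambda>k. (cmod (f k))\<^sup>2) {k} \<le> infsum (\<lambda>k. (cmod (f k))\<^sup>2) UNIV"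
    by (rule infsum_mono2) (auto intro: l2D[OF assms])
  hence "(cmod (f k))\<^sup>2 \<le> (l2norm f)\<^sup>2" by (simp add: l2norm_square)
  thus ?thesis using l2norm_nonneg by (auto intro: power2_le_imp_le)
qed

lemma l2inner_summable:
  assumes "l2 f" "l2 g"
  shows "(\<lambda>k. cnj (f k) * g k) summable_on UNIV"
  unfolding summable_on_iff_abs_summable_on_complex
  using l2_norm_mult_summable[OF assms] by (simp add: norm_mult)

lemma norm_l2inner_le:
  assumes "l2 f" "l2 g"
  shows "cmod (l2inner f g) \<le> l2norm f * l2norm g"
proof -
  have "cmod (l2inner f g) \<le> infsum (\<lambda>k. norm (cnj (f k) * g k)) UNIV"
    unfolding l2inner_def
    by (rule norm_infsum_bound) (use l2_norm_mult_summable[OF assms] in \<open>simp add: norm_mult\<close>)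
  also have "\<dots> = infsum (\<lambda>k. cmod (f k) * cmod (g k)) UNIV" by (simp add: norm_mult)
  also have "\<dots> \<le> l2norm f * l2norm g" by (rule l2_cauchy_schwarz[OF assms])
  finally show ?thesis .
qed

lemma l2inner_diff_right:
  assumes "l2 f" "l2 g" "l2 h"
  shows "l2inner f (\<lambda>k. g k - h k) = l2inner f g - l2inner f h"
  unfolding l2inner_def
  using infsum_diff[OF l2inner_summable[OF assms(1,2)] l2inner_summable[OF assms(1,3)]]
  by (simp add: right_diff_distrib)

lemma l2inner_diff_left:
  assumes "l2 f" "l2 g" "l2 h"
  shows "l2inner (\<lambda>k. f k - g k) h = l2inner f h - l2inner g h"
  unfolding l2inner_def
  using infsum_diff[OF l2inner_summable[OF assms(1,3)] l2inner_summable[OF assms(2,3)]]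
  by (simp add: left_diff_distrib)

lemma l2norm_triangle:
  assumes "l2 f" "l2 g"
  shows "l2norm (\<lambda>k. f k + g k) \<le> l2norm f + l2norm g"
proof -
  let ?S = "\<lambda>k. (cmod (f k))\<^sup>2 + 2 * (cmod (f k) * cmod (g k)) + (cmod (g k))\<^sup>2"
  have S: "?S summable_on UNIV"
    by (intro summable_on_add summable_on_cmult_right l2D l2_norm_mult_summable assms)
  have "(l2norm (\<lambda>k. f k + g k))\<^sup>2 \<le> infsum ?S UNIV"
    unfolding l2norm_square
    by (rule infsum_mono[OF l2D[OF l2_add[OF assms]] S norm_add_square_le])
  also have "\<dots> = (l2norm f)\<^sup>2 + 2 * infsum (\<lambda>k. cmod (f k) * cmod (g k)) UNIV + (l2norm g)\<^sup>2"
    unfolding l2norm_square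
    by (subst infsum_add, (intro summable_on_add summable_on_cmult_right l2D
          l2_norm_mult_summable assms)+)+
       (simp only: infsum_cmult_right[OF l2_norm_mult_summable[OF assms]])
  also have "\<dots> \<le> (l2norm f + l2norm g)\<^sup>2"
    using l2_cauchy_schwarz[OF assms] by (simp add: power2_sum)
  finally show ?thesis
    by (rule power2_le_imp_le) (simp add: l2norm_nonneg add_nonneg_nonneg)
qed

lemma l2norm_scale:
  assumes "l2 f"
  shows "l2norm (\<lambda>k. c * f k) = cmod c * l2norm f"
proof -
  have "infsum (\<lambda>k. (cmod (c * f k))\<^sup>2) UNIV = (cmod c)\<^sup>2 * infsum (\<lambda>k. (cmod (f k))\<^sup>2) UNIV"
    by (simp only: norm_mult power_mult_distrib infsum_cmult_right[OF l2D[OF assms]])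
  thus ?thesis unfolding l2norm_def by (simp add: real_sqrt_mult)
qed

lemma l2norm_reverse_triangle:
  assumes "l2 f" "l2 g"
  shows "\<bar>l2norm f - l2norm g\<bar> \<le> l2norm (\<lambda>k. f k - g k)"
proof -
  have "l2norm (\<lambda>k. f k - g k) = l2norm (\<lambda>k. g k - f k)"
    unfolding l2norm_def by (simp add: norm_minus_commute)
  thus ?thesis
    using l2norm_triangle[OF l2_diff[OF assms] assms(2)] l2norm_triangle[OF l2_diff[OF assms(2,1)] assms(1)]
    by simp
qed

definition l2_tendsto :: "(nat \<Rightarrow> vec) \<Rightarrow> vec \<Rightarrow> bool" where
  "l2_tendsto u u0 \<longleftrightarrow> (\<forall>n. l2 (u n)) \<and> l2 u0 \<and> (\<lambda>n. l2norm (\<lambda>k. u n k - u0 k)) \<longlonglongrightarrow> 0"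

lemma l2norm_tendsto:
  assumes "l2_tendsto u u0"
  shows "(\<lambda>n. l2norm (u n)) \<longlonglongrightarrow> l2norm u0"
proof -
  have "(\<lambda>n. l2norm (u n) - l2norm u0) \<longlonglongrightarrow> 0"
    by (rule Lim_null_comparison[where g="\<lambda>n. l2norm (\<lambda>k. u n k - u0 k)"])
       (use assms in \<open>auto simp: l2_tendsto_def intro!: always_eventually l2norm_reverse_triangle\<close>)
  thus ?thesis by (simp add: LIM_zero_iff)
qed

lemma l2inner_tendsto:
  assumes f: "l2_tendsto f f0" and g: "l2_tendsto g g0"
  shows "(\<lambda>n. l2inner (f n) (g n)) \<longlonglongrightarrow> l2inner f0 g0"
proof -
  have lf: "l2 (f n)" "l2 f0" and lg: "l2 (g n)" "l2 g0" for n
    using f g by (auto simp: l2_tendsto_def)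
  let ?df = "\<lambda>n. l2norm (\<lambda>k. f n k - f0 k)" and ?dg = "\<lambda>n. l2norm (\<lambda>k. g n k - g0 k)"
  have df: "?df \<longlonglongrightarrow> 0" and dg: "?dg \<longlonglongrightarrow> 0" using f g by (auto simp: l2_tendsto_def)
  have bound: "cmod (l2inner (f n) (g n) - l2inner f0 g0) \<le> ?df n * (?dg n + l2norm g0) + l2norm f0 * ?dg n"
    for n
  proof -
    have "l2inner (f n) (g n) - l2inner f0 g0
        = l2inner (\<lambda>k. f n k - f0 k) (g n) + l2inner f0 (\<lambda>k. g n k - g0 k)"
      using l2inner_diff_left[OF lf(1) lf(2) lg(1)] l2inner_diff_right[OF lf(2) lg(1) lg(2)] by simp
    also have "cmod \<dots> \<le> ?df n * l2norm (g n) + l2norm f0 * ?dg n"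
      by (rule order.trans[OF norm_triangle_ineq add_mono]) (intro norm_l2inner_le l2_diff lf lg)+
    also have "?df n * l2norm (g n) \<le> ?df n * (?dg n + l2norm g0)"
      using l2norm_reverse_triangle[OF lg(1)[of n] lg(2)] by (intro mult_left_mono l2norm_nonneg) linarith
    finally show ?thesis by linarith
  qed
  have "(\<lambda>n. l2inner (f n) (g n) - l2inner f0 g0) \<longlonglongrightarrow> 0"
    by (rule Lim_null_comparison[OF always_eventually[OF allI[OF bound]]])
       (use tendsto_add[OF tendsto_mult[OF df tendsto_add[OF dg tendsto_const]] tendsto_mult[OF tendsto_const dg]]
        in simp)
  thus ?thesis by (simp add: LIM_zero_iff)
qed

lemma bounded_op_diff:
  assumes "bounded_op B" "l2 f" "l2 g"
  shows "B (\<lambda>k. f k - g k) = (\<lambda>k. B f k - B g k)"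
  using assms unfolding bounded_op_def
  by (metis (no_types, lifting) ext mult_minus1 uminus_add_conv_diff diff_conv_add_uminus)

lemma bounded_op_l2_tendsto:
  assumes B: "bounded_op B" and u: "l2_tendsto u u0"
  shows "l2_tendsto (\<lambda>n. B (u n)) (B u0)"
proof -
  have lu: "l2 (u n)" "l2 u0" for n using u by (auto simp: l2_tendsto_def)
  obtain C where C: "\<And>f. l2 f \<Longrightarrow> l2norm (B f) \<le> C * l2norm f" and l2B: "\<And>f. l2 f \<Longrightarrow> l2 (B f)"
    using B unfolding bounded_op_def by blast
  have d: "(\<lambda>n. l2norm (\<lambda>k. u n k - u0 k)) \<longlonglongrightarrow> 0" using u by (simp add: l2_tendsto_def)
  have "(\<lambda>n. l2norm (\<lambda>k. B (u n) k - B u0 k)) \<longlonglongrightarrow> 0"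
  proof (rule Lim_null_comparison)
    show "\<forall>\<^sub>F n in sequentially. norm (l2norm (\<lambda>k. B (u n) k - B u0 k)) \<le> C * l2norm (\<lambda>k. u n k - u0 k)"
      using C[OF l2_diff[OF lu]] bounded_op_diff[OF B lu]
      by (auto simp: l2norm_nonneg intro!: always_eventually)
    show "(\<lambda>n. C * l2norm (\<lambda>k. u n k - u0 k)) \<longlonglongrightarrow> 0"
      using tendsto_mult[OF tendsto_const d, of C] by simp
  qed
  thus ?thesis unfolding l2_tendsto_def using l2B lu by auto
qed

section \<open>Operators dominated by convolution kernels\<close>

definition l1_kernel :: "(int \<Rightarrow> real) \<Rightarrow> bool" where
  "l1_kernel V \<longleftrightarrow> (\<forall>n. V n \<ge> 0) \<and> V summable_on UNIV"

lemma l1_kernel_nonneg: "l1_kernel V \<Longrightarrow> V n \<ge> 0"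
  by (simp add: l1_kernel_def)

lemma l1_kernel_summable: "l1_kernel V \<Longrightarrow> V summable_on UNIV"
  by (simp add: l1_kernel_def)

lemma summable_on_reflect:
  fixes j :: int
  assumes "V summable_on UNIV"
  shows "(\<lambda>k. V (j - k)) summable_on UNIV"
proof -
  have "(\<lambda>k. V (j - k)) summable_on UNIV \<longleftrightarrow> V summable_on UNIV"
    by (rule summable_on_reindex_bij_witness[where i="\<lambda>n. j - n" and j="\<lambda>k. j - k"])
       (auto simp: algebra_simps)
  thus ?thesis using assms by simp
qed

lemma infsum_reflect:
  fixes j :: int
  shows "infsum (\<lambda>k. V (j - k)) UNIV = infsum V UNIV"
  by (rule infsum_reindex_bij_witness[where i="\<lambda>n. j - n" and j="\<lambda>k. j - k"]) (auto simp: algebra_simps)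

lemma summable_on_translate:
  fixes k :: int
  assumes "V summable_on UNIV"
  shows "(\<lambda>j. V (j - k)) summable_on UNIV"
proof -
  have "(\<lambda>j. V (j - k)) summable_on UNIV \<longleftrightarrow> V summable_on UNIV"
    by (rule summable_on_reindex_bij_witness[where i="\<lambda>n. n + k" and j="\<lambda>j. j - k"]) auto
  thus ?thesis using assms by simp
qed

lemma infsum_translate:
  fixes k :: int
  shows "infsum (\<lambda>j. V (j - k)) UNIV = infsum V UNIV"
  by (rule infsum_reindex_bij_witness[where i="\<lambda>n. n + k" and j="\<lambda>j. j - k"]) auto

text \<open>\<open>kernel_conv V f\<close> is the convolution \<open>V * |f|\<close>; it majorizes every operator whose matrix
  is dominated by \<open>V(j - k)\<close>.\<close>

definition kernel_conv :: "(int \<Rightarrow> real) \<Rightarrow> vec \<Rightarrow> int \<Rightarrow> real" where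
  "kernel_conv V f j = infsum (\<lambda>k. V (j - k) * cmod (f k)) UNIV"

lemma kernel_conv_summable:
  assumes V: "l1_kernel V" and f: "l2 f"
  shows "(\<lambda>k. V (j - k) * cmod (f k)) summable_on UNIV"
proof (rule summable_on_comparison_test)
  show "(\<lambda>k. V (j - k) * l2norm f) summable_on UNIV"
    by (intro summable_on_cmult_left summable_on_reflect l1_kernel_summable[OF V])
qed (auto intro!: mult_left_mono mult_nonneg_nonneg norm_le_l2norm f l1_kernel_nonneg[OF V])

lemma kernel_conv_nonneg: "l1_kernel V \<Longrightarrow> kernel_conv V f j \<ge> 0"
  unfolding kernel_conv_def by (auto intro!: infsum_nonneg simp: l1_kernel_def)

lemma kernel_conv_le:
  assumes V: "l1_kernel V" and f: "l2 f"
  shows "kernel_conv V f j \<le> infsum V UNIV * l2norm f"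
proof -
  have "kernel_conv V f j \<le> infsum (\<lambda>k. V (j - k) * l2norm f) UNIV"
    unfolding kernel_conv_def
    by (rule infsum_mono[OF kernel_conv_summable[OF V f]
          summable_on_cmult_left[OF summable_on_reflect[OF l1_kernel_summable[OF V]]]])
       (use V f in \<open>auto intro!: mult_left_mono norm_le_l2norm l1_kernel_nonneg\<close>)
  also have "\<dots> = infsum V UNIV * l2norm f" by (simp add: infsum_cmult_left' infsum_reflect)
  finally show ?thesis .
qed

text \<open>Young's inequality \<open>\<parallel>V * |f|\<parallel>\<^sub>2 \<le> \<parallel>V\<parallel>\<^sub>1 \<parallel>f\<parallel>\<^sub>2\<close>: by Cauchy--Schwarz against the weights
  \<open>V(j - k)\<close>, \<open>(V * |f|)(j)\<^sup>2 \<le> \<parallel>V\<parallel>\<^sub>1 (V * |f|\<^sup>2)(j)\<close>, and the right-hand side sums to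
  \<open>\<parallel>V\<parallel>\<^sub>1\<^sup>2 \<parallel>f\<parallel>\<^sub>2\<^sup>2\<close>.\<close>

lemma weighted_square_summable:
  assumes V: "l1_kernel V" and f: "l2 f"
  shows "(\<lambda>k. V (j - k) * (cmod (f k))\<^sup>2) summable_on UNIV"
proof (rule summable_on_comparison_test)
  show "(\<lambda>k. V (j - k) * (l2norm f)\<^sup>2) summable_on UNIV"
    by (intro summable_on_cmult_left summable_on_reflect l1_kernel_summable[OF V])
qed (auto intro!: mult_left_mono mult_nonneg_nonneg power_mono norm_le_l2norm f l1_kernel_nonneg[OF V])

lemma kernel_conv_square_le:
  assumes V: "l1_kernel V" and f: "l2 f"
  shows "(kernel_conv V f j)\<^sup>2 \<le> infsum V UNIV * infsum (\<lambda>k. V (j - k) * (cmod (f k))\<^sup>2) UNIV"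
proof -
  let ?Q = "infsum (\<lambda>k. V (j - k) * (cmod (f k))\<^sup>2) UNIV"
  let ?u = "\<lambda>k. sqrt (V (j - k))" and ?v = "\<lambda>k. sqrt (V (j - k)) * cmod (f k)"
  have Vn: "V n \<ge> 0" for n by (rule l1_kernel_nonneg[OF V])
  have u2: "(?u k)\<^sup>2 = V (j - k)" and v2: "(?v k)\<^sup>2 = V (j - k) * (cmod (f k))\<^sup>2" for k
    using Vn by (simp_all add: power_mult_distrib)
  have "kernel_conv V f j = infsum (\<lambda>k. ?u k * ?v k) UNIV"
    unfolding kernel_conv_def using Vn by (simp add: mult.assoc[symmetric])
  also have "\<dots> \<le> sqrt (infsum V UNIV) * sqrt ?Q"
    using infsum_mult_le_sqrt(2)[of ?u UNIV ?v] summable_on_reflect[OF l1_kernel_summable[OF V]]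
      weighted_square_summable[OF V f] Vn
    unfolding u2 v2 by (simp add: infsum_reflect)
  finally have "kernel_conv V f j \<le> sqrt (infsum V UNIV) * sqrt ?Q" .
  hence "(kernel_conv V f j)\<^sup>2 \<le> (sqrt (infsum V UNIV) * sqrt ?Q)\<^sup>2"
    by (intro power_mono kernel_conv_nonneg[OF V])
  also have "\<dots> = infsum V UNIV * ?Q"
    using V by (simp add: power_mult_distrib infsum_nonneg Vn l1_kernel_def)
  finally show ?thesis .
qed

lemma weighted_square_total:
  assumes V: "l1_kernel V" and f: "l2 f"
  shows "(\<lambda>j. infsum (\<lambda>k. V (j - k) * (cmod (f k))\<^sup>2) UNIV) summable_on UNIV"
    and "infsum (\<lambda>j. infsum (\<lambda>k. V (j - k) * (cmod (f k))\<^sup>2) UNIV) UNIV = infsum V UNIV * (l2norm f)\<^sup>2"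
proof -
  have Vs: "V summable_on UNIV" by (rule l1_kernel_summable[OF V])
  have "(\<lambda>(k, j). V (j - k) * (cmod (f k))\<^sup>2) summable_on UNIV \<times> UNIV"
  proof (rule summable_on_SigmaI[where g="\<lambda>k. infsum V UNIV * (cmod (f k))\<^sup>2"])
    show "((\<lambda>j. case (k, j) of (k, j) \<Rightarrow> V (j - k) * (cmod (f k))\<^sup>2) has_sum infsum V UNIV * (cmod (f k))\<^sup>2)
        UNIV" for k
      using has_sum_cmult_left[OF has_sum_infsum[OF summable_on_translate[OF Vs, of k]], of "(cmod (f k))\<^sup>2"]
      by (simp add: infsum_translate)
    show "(\<lambda>k. infsum V UNIV * (cmod (f k))\<^sup>2) summable_on UNIV"
      by (intro summable_on_cmult_right l2D f)
  qed (auto intro!: mult_nonneg_nonneg l1_kernel_nonneg[OF V])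
  hence pairs: "(\<lambda>(j, k). V (j - k) * (cmod (f k))\<^sup>2) summable_on UNIV \<times> UNIV"
    by (subst summable_on_swap) (simp add: case_prod_unfold)
  show "(\<lambda>j. infsum (\<lambda>k. V (j - k) * (cmod (f k))\<^sup>2) UNIV) summable_on UNIV"
    using summable_on_SigmaD[OF pairs[unfolded case_prod_unfold]] weighted_square_summable[OF V f]
    by simp
  have "infsum (\<lambda>j. infsum (\<lambda>k. V (j - k) * (cmod (f k))\<^sup>2) UNIV) UNIV
      = infsum (\<lambda>k. infsum (\<lambda>j. V (j - k) * (cmod (f k))\<^sup>2) UNIV) UNIV"
    by (rule infsum_swap_banach[OF pairs])
  also have "\<dots> = infsum V UNIV * (l2norm f)\<^sup>2"
    by (simp add: infsum_cmult_left[OF summable_on_translate[OF Vs]] infsum_translate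
        infsum_cmult_right[OF l2D[OF f]] l2norm_square mult.commute)
  finally show "infsum (\<lambda>j. infsum (\<lambda>k. V (j - k) * (cmod (f k))\<^sup>2) UNIV) UNIV
      = infsum V UNIV * (l2norm f)\<^sup>2" .
qed

lemma kernel_conv_l2:
  assumes V: "l1_kernel V" and f: "l2 f"
  shows "l2 (\<lambda>j. complex_of_real (kernel_conv V f j))"
    and "l2norm (\<lambda>j. complex_of_real (kernel_conv V f j)) \<le> infsum V UNIV * l2norm f"
proof -
  let ?Q = "\<lambda>j. infsum (\<lambda>k. V (j - k) * (cmod (f k))\<^sup>2) UNIV"
  have SV0: "infsum V UNIV \<ge> 0" using V by (simp add: l1_kernel_def infsum_nonneg)
  have Q_summable: "(\<lambda>j. infsum V UNIV * ?Q j) summable_on UNIV"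
    by (rule summable_on_cmult_right[OF weighted_square_total(1)[OF V f]])
  have S2: "(\<lambda>j. (kernel_conv V f j)\<^sup>2) summable_on UNIV"
    by (rule summable_on_comparison_test[OF Q_summable]) (auto intro: kernel_conv_square_le[OF V f])
  thus "l2 (\<lambda>j. complex_of_real (kernel_conv V f j))" unfolding l2_def by simp
  have "(l2norm (\<lambda>j. complex_of_real (kernel_conv V f j)))\<^sup>2 = infsum (\<lambda>j. (kernel_conv V f j)\<^sup>2) UNIV"
    by (simp add: l2norm_square)
  also have "\<dots> \<le> infsum (\<lambda>j. infsum V UNIV * ?Q j) UNIV"
    by (rule infsum_mono[OF S2 Q_summable]) (rule kernel_conv_square_le[OF V f])
  also have "\<dots> = (infsum V UNIV * l2norm f)\<^sup>2"
    by (simp only: infsum_cmult_right[OF weighted_square_total(1)[OF V f]] weighted_square_total(2)[OF V f])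
       (simp add: power2_eq_square)
  finally show "l2norm (\<lambda>j. complex_of_real (kernel_conv V f j)) \<le> infsum V UNIV * l2norm f"
    by (rule power2_le_imp_le) (simp add: SV0 l2norm_nonneg)
qed

lemma l2_le_kernel_conv:
  assumes V: "l1_kernel V" and f: "l2 f" and w: "\<And>j. cmod (w j) \<le> kernel_conv V f j"
  shows "l2 w" and "l2norm w \<le> infsum V UNIV * l2norm f"
proof -
  have w': "cmod (w j) \<le> cmod (complex_of_real (kernel_conv V f j))" for j
    using w[of j] kernel_conv_nonneg[OF V] by simp
  show "l2 w" by (rule l2_dominated[OF kernel_conv_l2(1)[OF V f] w'])
  show "l2norm w \<le> infsum V UNIV * l2norm f"
    by (rule order.trans[OF l2norm_mono[OF kernel_conv_l2(1)[OF V f] w'] kernel_conv_l2(2)[OF V f]])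
qed

lemma infsum_le_kernel_conv:
  assumes V: "l1_kernel V" and h: "l2 h" and F: "\<And>k. cmod (F k) \<le> V (j - k) * cmod (h k)"
  shows "F summable_on UNIV" and "cmod (infsum F UNIV) \<le> kernel_conv V h j"
proof -
  have S: "(\<lambda>k. norm (F k)) summable_on UNIV"
    by (rule summable_on_comparison_test[OF kernel_conv_summable[OF V h, of j]]) (use F in auto)
  thus "F summable_on UNIV" by (simp add: summable_on_iff_abs_summable_on_complex)
  have "cmod (infsum F UNIV) \<le> infsum (\<lambda>k. norm (F k)) UNIV"
    by (rule norm_infsum_bound) (use S in simp)
  also have "\<dots> \<le> kernel_conv V h j" unfolding kernel_conv_def
    by (rule infsum_mono[OF S kernel_conv_summable[OF V h]]) (use F in auto)
  finally show "cmod (infsum F UNIV) \<le> kernel_conv V h j" .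
qed

lemma summable_on_pairs_bilinear:
  assumes V: "l1_kernel V" and h: "l2 h" and u: "l2 u"
    and F: "\<And>k j. cmod (F k j) \<le> V (k - j) * cmod (h j) * cmod (u k)"
  shows "(\<lambda>(k, j). F k j) summable_on UNIV \<times> UNIV"
proof -
  have B: "(\<lambda>(k, j). V (k - j) * cmod (h j) * cmod (u k)) summable_on UNIV \<times> UNIV"
  proof (rule summable_on_SigmaI[where g="\<lambda>k. kernel_conv V h k * cmod (u k)"])
    show "((\<lambda>j. case (k, j) of (k, j) \<Rightarrow> V (k - j) * cmod (h j) * cmod (u k))
        has_sum kernel_conv V h k * cmod (u k)) UNIV" for k
      unfolding kernel_conv_def
      using has_sum_cmult_left[OF has_sum_infsum[OF kernel_conv_summable[OF V h, of k]], of "cmod (u k)"]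
      by simp
    show "(\<lambda>k. kernel_conv V h k * cmod (u k)) summable_on UNIV"
      using l2_norm_mult_summable[OF kernel_conv_l2(1)[OF V h] u] kernel_conv_nonneg[OF V] by simp
  qed (auto intro!: mult_nonneg_nonneg l1_kernel_nonneg[OF V])
  have "(\<lambda>x. norm (case x of (k, j) \<Rightarrow> F k j)) summable_on UNIV \<times> UNIV"
    by (rule summable_on_comparison_test[OF B]) (auto simp: F)
  thus ?thesis unfolding summable_on_iff_abs_summable_on_complex by simp
qed

lemma summable_on_pairs_iterated:
  assumes V: "l1_kernel V" and W: "l1_kernel W" and h: "l2 h"
    and F: "\<And>k l. cmod (F k l) \<le> V (j - k) * W (k - l) * cmod (h l)"
  shows "(\<lambda>(k, l). F k l) summable_on UNIV \<times> UNIV"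
proof -
  have B: "(\<lambda>(k, l). V (j - k) * W (k - l) * cmod (h l)) summable_on UNIV \<times> UNIV"
  proof (rule summable_on_SigmaI[where g="\<lambda>k. V (j - k) * kernel_conv W h k"])
    show "((\<lambda>l. case (k, l) of (k, l) \<Rightarrow> V (j - k) * W (k - l) * cmod (h l))
        has_sum V (j - k) * kernel_conv W h k) UNIV" for k
      unfolding kernel_conv_def
      using has_sum_cmult_right[OF has_sum_infsum[OF kernel_conv_summable[OF W h, of k]], of "V (j - k)"]
      by (simp add: mult.assoc)
    show "(\<lambda>k. V (j - k) * kernel_conv W h k) summable_on UNIV"
    proof (rule summable_on_comparison_test)
      show "(\<lambda>k. V (j - k) * (infsum W UNIV * l2norm h)) summable_on UNIV"
        by (intro summable_on_cmult_left summable_on_reflect l1_kernel_summable[OF V])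
    qed (auto intro!: mult_left_mono kernel_conv_le W h mult_nonneg_nonneg l1_kernel_nonneg[OF V]
          kernel_conv_nonneg[OF W])
  qed (auto intro!: mult_nonneg_nonneg l1_kernel_nonneg[OF V] l1_kernel_nonneg[OF W])
  have "(\<lambda>x. norm (case x of (k, l) \<Rightarrow> F k l)) summable_on UNIV \<times> UNIV"
    by (rule summable_on_comparison_test[OF B]) (auto simp: F)
  thus ?thesis unfolding summable_on_iff_abs_summable_on_complex by simp
qed

definition matrix_op :: "(int \<Rightarrow> int \<Rightarrow> complex) \<Rightarrow> op" where
  "matrix_op M f = (\<lambda>j. infsum (\<lambda>k. M j k * f k) UNIV)"

definition kernel_dominated :: "(int \<Rightarrow> real) \<Rightarrow> (int \<Rightarrow> int \<Rightarrow> complex) \<Rightarrow> bool" where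
  "kernel_dominated V M \<longleftrightarrow> l1_kernel V \<and> (\<forall>j k. cmod (M j k) \<le> V (j - k))"

lemma kernel_dominated_row:
  assumes "kernel_dominated V M" "l2 f"
  shows "(\<lambda>k. M j k * f k) summable_on UNIV" and "cmod (matrix_op M f j) \<le> kernel_conv V f j"
  using infsum_le_kernel_conv[of V f "\<lambda>k. M j k * f k" j] assms
  by (auto simp: kernel_dominated_def matrix_op_def norm_mult mult_right_mono)

lemma matrix_op_bounded:
  assumes M: "kernel_dominated V M"
  shows "bounded_op (matrix_op M)"
    and "\<And>f. l2 f \<Longrightarrow> l2norm (matrix_op M f) \<le> infsum V UNIV * l2norm f"
proof -
  have V: "l1_kernel V" using M by (simp add: kernel_dominated_def)
  show norm_le: "l2norm (matrix_op M f) \<le> infsum V UNIV * l2norm f" if "l2 f" for f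
    by (rule l2_le_kernel_conv(2)[OF V that kernel_dominated_row(2)[OF M that]])
  have linear: "matrix_op M (\<lambda>k. f k + c * g k) = (\<lambda>k. matrix_op M f k + c * matrix_op M g k)"
    if f: "l2 f" and g: "l2 g" for f g c
  proof
    fix j
    have "matrix_op M (\<lambda>k. f k + c * g k) j = infsum (\<lambda>k. M j k * f k + c * (M j k * g k)) UNIV"
      unfolding matrix_op_def by (simp add: algebra_simps)
    also have "\<dots> = matrix_op M f j + c * matrix_op M g j"
      unfolding matrix_op_def
      using kernel_dominated_row(1)[OF M f] summable_on_cmult_right[OF kernel_dominated_row(1)[OF M g]]
      by (simp add: infsum_add infsum_cmult_right')
    finally show "matrix_op M (\<lambda>k. f k + c * g k) j = matrix_op M f j + c * matrix_op M g j" .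
  qed
  show "bounded_op (matrix_op M)"
    unfolding bounded_op_def
    using l2_le_kernel_conv(1)[OF V _ kernel_dominated_row(2)[OF M]] linear norm_le by blast
qed

lemma sum_power_le_geometric:
  fixes \<tau> :: real
  assumes "0 \<le> \<tau>" "\<tau> < 1" "finite N"
  shows "(\<Sum>m\<in>N. \<tau> ^ m) \<le> 1 / (1 - \<tau>)"
proof -
  have "(\<Sum>m\<in>N. \<tau> ^ m) \<le> (\<Sum>m. \<tau> ^ m)"
    by (rule sum_le_suminf) (use assms in \<open>auto intro: summable_geometric\<close>)
  also have "\<dots> = 1 / (1 - \<tau>)" using assms by (intro suminf_geometric) auto
  finally show ?thesis .
qed

lemma real_mult_power_le:
  fixes \<tau> :: real
  assumes "0 \<le> \<tau>" "\<tau> < 1"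
  shows "real d * \<tau> ^ d \<le> 1 / (1 - \<tau>)"
proof -
  have "real d * \<tau> ^ d = (\<Sum>i<d. \<tau> ^ d)" by simp
  also have "\<dots> \<le> (\<Sum>i<d. \<tau> ^ i)"
    by (rule sum_mono) (use assms in \<open>auto intro: power_decreasing\<close>)
  also have "\<dots> \<le> 1 / (1 - \<tau>)" by (rule sum_power_le_geometric) (use assms in auto)
  finally show ?thesis .
qed

lemma summable_on_power_abs_int:
  fixes \<tau> :: real
  assumes "0 \<le> \<tau>" "\<tau> < 1"
  shows "(\<lambda>n::int. \<tau> ^ nat \<bar>n\<bar>) summable_on UNIV"
proof (rule nonneg_bdd_above_summable_on)
  show "bdd_above (sum (\<lambda>n::int. \<tau> ^ nat \<bar>n\<bar>) ` {F. F \<subseteq> UNIV \<and> finite F})"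
  proof (rule bdd_aboveI2)
    fix F :: "int set" assume "F \<in> {F. F \<subseteq> UNIV \<and> finite F}"
    hence F: "finite F" by simp
    have half: "sum (\<lambda>n. \<tau> ^ nat \<bar>n\<bar>) (F \<inter> {n. P n}) \<le> 1 / (1 - \<tau>)"
      if "inj_on (\<lambda>n. nat \<bar>n\<bar>) {n. P n}" for P
    proof -
      have "sum (\<lambda>n. \<tau> ^ nat \<bar>n\<bar>) (F \<inter> {n. P n}) = sum (\<lambda>m. \<tau> ^ m) ((\<lambda>n. nat \<bar>n\<bar>) ` (F \<inter> {n. P n}))"
        by (subst sum.reindex) (use that in \<open>auto intro: inj_on_subset\<close>)
      also have "\<dots> \<le> 1 / (1 - \<tau>)" by (rule sum_power_le_geometric) (use assms F in auto)
      finally show ?thesis .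
    qed
    have "sum (\<lambda>n. \<tau> ^ nat \<bar>n\<bar>) F
        = sum (\<lambda>n. \<tau> ^ nat \<bar>n\<bar>) (F \<inter> {n. n \<ge> 0}) + sum (\<lambda>n. \<tau> ^ nat \<bar>n\<bar>) (F \<inter> {n. \<not> n \<ge> 0})"
      using F by (subst sum.Int_Diff[of F _ "{n. n \<ge> 0}"]) (auto intro!: sum.cong)
    also have "\<dots> \<le> 1 / (1 - \<tau>) + 1 / (1 - \<tau>)"
      by (intro add_mono half) (auto simp: inj_on_def)
    finally show "sum (\<lambda>n. \<tau> ^ nat \<bar>n\<bar>) F \<le> 2 / (1 - \<tau>)" by simp
  qed
qed (use assms in auto)

lemma l1_kernel_power_abs:
  fixes \<tau> C :: real
  assumes "0 \<le> \<tau>" "\<tau> < 1" "C \<ge> 0"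
  shows "l1_kernel (\<lambda>n. C * \<tau> ^ nat \<bar>n\<bar>)"
  unfolding l1_kernel_def using assms
  by (auto intro!: summable_on_cmult_right summable_on_power_abs_int)

section \<open>Consequences of the decay of \<open>\<Delta>\<gamma>\<close> and \<open>\<Delta>\<^sup>2\<gamma>\<close>\<close>

lemma Delta_telescope:
  fixes f :: "int \<Rightarrow> complex"
  assumes "x \<le> y"
  shows "f x - f y = (\<Sum>i\<in>{x..<y}. Delta f i)"
  using assms
proof (induction y rule: int_ge_induct)
  case (step y)
  have "{x..<y + 1} = insert y {x..<y}" using step.hyps by auto
  moreover have "f x = (\<Sum>i\<in>{x..<y}. Delta f i) + f y" using step.IH by (metis diff_add_cancel)
  ultimately show ?case by (simp add: Delta_def)
qed simp

lemma norm_diff_le_Delta_bound: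
  fixes f :: "int \<Rightarrow> complex"
  assumes c: "c \<ge> 0" and Delta_le: "\<And>t. min x y \<le> t \<Longrightarrow> t < max x y \<Longrightarrow> c * cmod (Delta f t) \<le> B"
  shows "c * cmod (f x - f y) \<le> real_of_int \<bar>x - y\<bar> * B"
proof -
  have ordered: "c * cmod (f u - f v) \<le> real_of_int (v - u) * B"
    if uv: "u \<le> v" and le: "\<And>t. u \<le> t \<Longrightarrow> t < v \<Longrightarrow> c * cmod (Delta f t) \<le> B" for u v
  proof -
    have "c * cmod (f u - f v) \<le> c * (\<Sum>i\<in>{u..<v}. cmod (Delta f i))"
      unfolding Delta_telescope[OF uv] by (intro mult_left_mono norm_sum c)
    also have "\<dots> \<le> (\<Sum>i\<in>{u..<v}. B)"
      unfolding sum_distrib_left by (intro sum_mono) (use le in auto)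
    finally show ?thesis using uv by simp
  qed
  show ?thesis
  proof (cases "x \<le> y")
    case True
    thus ?thesis using ordered[of x y] Delta_le by simp
  next
    case False
    thus ?thesis using ordered[of y x] Delta_le by (simp add: norm_minus_commute)
  qed
qed

lemma Delta_add_linear: "Delta (\<lambda>i. f i + of_int i * d) t = Delta f t - d"
  unfolding Delta_def by (simp add: algebra_simps)

locale q2_decay =
  fixes \<gamma> :: "int \<Rightarrow> complex" and G B1 B2 :: real
  assumes bounded: "\<And>k. cmod (\<gamma> k) \<le> G"
    and Delta_decay: "\<And>k. cmod (of_int k * Delta \<gamma> k) \<le> B1"
    and Delta2_decay: "\<And>k. cmod ((of_int k)\<^sup>2 * Delta (Delta \<gamma>) k) \<le> B2"
begin

lemma G_nonneg: "G \<ge> 0" using bounded[of 0] norm_ge_zero order_trans by blast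
lemma B1_nonneg: "B1 \<ge> 0" using Delta_decay[of 0] norm_ge_zero order_trans by blast
lemma B2_nonneg: "B2 \<ge> 0" using Delta2_decay[of 0] norm_ge_zero order_trans by blast

text \<open>Far from the origin, within distance \<open>D\<close> of a point \<open>k\<close> with \<open>3D \<le> |k|\<close>, the decay
  of \<open>\<Delta>\<gamma>\<close> and \<open>\<Delta>\<^sup>2\<gamma>\<close> may be measured in \<open>k\<close> instead of the actual position \<open>t\<close>,
  since there \<open>2|k| \<le> 3|t|\<close>.\<close>

lemma Delta_decay_near:
  fixes t k D :: int
  assumes "\<bar>t - k\<bar> \<le> D" "3 * D \<le> \<bar>k\<bar>"
  shows "\<bar>real_of_int k\<bar> * cmod (Delta \<gamma> t) \<le> 3/2 * B1"
proof -
  have "\<bar>real_of_int k\<bar> * cmod (Delta \<gamma> t) \<le> (3/2 * \<bar>real_of_int t\<bar>) * cmod (Delta \<gamma> t)"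
    by (rule mult_right_mono) (use assms in linarith, simp)
  also have "\<dots> \<le> 3/2 * B1" using Delta_decay[of t] by (simp add: norm_mult)
  finally show ?thesis .
qed

lemma Delta2_decay_near:
  fixes t k D :: int
  assumes "\<bar>t - k\<bar> \<le> D" "3 * D \<le> \<bar>k\<bar>"
  shows "(real_of_int k)\<^sup>2 * cmod (Delta (Delta \<gamma>) t) \<le> 9/4 * B2"
proof -
  have "(2 * \<bar>real_of_int k\<bar>)\<^sup>2 \<le> (3 * \<bar>real_of_int t\<bar>)\<^sup>2"
    by (intro power_mono) (use assms in linarith)+
  hence "(real_of_int k)\<^sup>2 \<le> 9/4 * (real_of_int t)\<^sup>2" by (simp add: power_mult_distrib)
  hence "(real_of_int k)\<^sup>2 * cmod (Delta (Delta \<gamma>) t) \<le> (9/4 * (real_of_int t)\<^sup>2) * cmod (Delta (Delta \<gamma>) t)"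
    by (rule mult_right_mono) simp
  also have "\<dots> \<le> 9/4 * B2" using Delta2_decay[of t] by (simp add: norm_mult norm_power mult.commute)
  finally show ?thesis .
qed

lemma difference_decay_near:
  fixes j k :: int
  assumes "3 * \<bar>j - k\<bar> \<le> \<bar>k\<bar>"
  shows "\<bar>real_of_int k\<bar> * cmod (\<gamma> k - \<gamma> j) \<le> real_of_int \<bar>j - k\<bar> * (3/2 * B1)"
proof -
  have "\<bar>real_of_int k\<bar> * cmod (\<gamma> k - \<gamma> j) \<le> real_of_int \<bar>k - j\<bar> * (3/2 * B1)"
  proof (rule norm_diff_le_Delta_bound)
    fix t assume "min k j \<le> t" "t < max k j"
    hence "\<bar>t - k\<bar> \<le> \<bar>j - k\<bar>" by linarith
    thus "\<bar>real_of_int k\<bar> * cmod (Delta \<gamma> t) \<le> 3/2 * B1" by (rule Delta_decay_near[OF _ assms])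
  qed simp
  thus ?thesis by (simp add: abs_minus_commute)
qed

lemma Delta_difference_decay_near:
  fixes i k D :: int
  assumes "\<bar>i - k\<bar> \<le> D" "3 * D \<le> \<bar>k\<bar>"
  shows "(real_of_int k)\<^sup>2 * cmod (Delta \<gamma> i - Delta \<gamma> k) \<le> real_of_int \<bar>i - k\<bar> * (9/4 * B2)"
proof (rule norm_diff_le_Delta_bound)
  fix t assume "min i k \<le> t" "t < max i k"
  hence "\<bar>t - k\<bar> \<le> D" using assms(1) by linarith
  thus "(real_of_int k)\<^sup>2 * cmod (Delta (Delta \<gamma>) t) \<le> 9/4 * B2" by (rule Delta2_decay_near[OF _ assms(2)])
qed simp

definition taylor_rem :: "int \<Rightarrow> int \<Rightarrow> int \<Rightarrow> complex" where
  "taylor_rem k x y = \<gamma> x - \<gamma> y - of_int (y - x) * Delta \<gamma> k"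

lemma taylor_rem_decay_near:
  fixes x y k D :: int
  assumes "\<bar>x - k\<bar> \<le> D" "\<bar>y - k\<bar> \<le> D" "3 * D \<le> \<bar>k\<bar>"
  shows "(real_of_int k)\<^sup>2 * cmod (taylor_rem k x y) \<le> real_of_int \<bar>x - y\<bar> * (real_of_int D * (9/4 * B2))"
proof -
  let ?f = "\<lambda>i. \<gamma> i + of_int i * Delta \<gamma> k"
  have eq: "taylor_rem k x y = ?f x - ?f y" unfolding taylor_rem_def by (simp add: algebra_simps)
  have step: "(real_of_int k)\<^sup>2 * cmod (Delta ?f t) \<le> real_of_int D * (9/4 * B2)"
    if "min x y \<le> t" "t < max x y" for t
  proof -
    have tD: "\<bar>t - k\<bar> \<le> D" using that assms by linarith
    have "(real_of_int k)\<^sup>2 * cmod (Delta ?f t) \<le> real_of_int \<bar>t - k\<bar> * (9/4 * B2)"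
      unfolding Delta_add_linear by (rule Delta_difference_decay_near[OF tD assms(3)])
    also have "\<dots> \<le> real_of_int D * (9/4 * B2)" using tD B2_nonneg by (intro mult_right_mono) auto
    finally show ?thesis .
  qed
  show ?thesis unfolding eq by (rule norm_diff_le_Delta_bound[OF _ step]) simp_all
qed

lemma taylor_rem_pair_decay_near:
  fixes j l x k D :: int
  assumes "\<bar>j - k\<bar> \<le> D" "\<bar>l - k\<bar> \<le> D" "\<bar>x - k\<bar> \<le> D" "\<bar>j - x\<bar> + \<bar>x - l\<bar> = D"
    and far: "3 * D \<le> \<bar>k\<bar>"
  shows "(real_of_int k)\<^sup>2 * cmod (taylor_rem k j x - taylor_rem k x l) \<le> (real_of_int D)\<^sup>2 * (9/4 * B2)"
proof -
  have "(real_of_int k)\<^sup>2 * cmod (taylor_rem k j x - taylor_rem k x l)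
      \<le> (real_of_int k)\<^sup>2 * cmod (taylor_rem k j x) + (real_of_int k)\<^sup>2 * cmod (taylor_rem k x l)"
    using mult_left_mono[OF norm_triangle_ineq4[of "taylor_rem k j x" "taylor_rem k x l"], of "(real_of_int k)\<^sup>2"]
    by (simp add: distrib_left)
  also have "\<dots> \<le> real_of_int \<bar>j - x\<bar> * (real_of_int D * (9/4 * B2))
      + real_of_int \<bar>x - l\<bar> * (real_of_int D * (9/4 * B2))"
    by (intro add_mono taylor_rem_decay_near assms)
  also have "\<dots> = real_of_int (\<bar>j - x\<bar> + \<bar>x - l\<bar>) * (real_of_int D * (9/4 * B2))"
    by (simp add: distrib_right)
  also have "\<dots> = (real_of_int D)\<^sup>2 * (9/4 * B2)"
    unfolding assms(4) by (simp add: power2_eq_square)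
  finally show ?thesis .
qed

lemma weighted_difference_bound:
  fixes j k :: int
  shows "real_of_int \<bar>j + k\<bar> * cmod (\<gamma> k - \<gamma> j) \<le> (14 * G + 4 * B1) * real_of_int \<bar>j - k\<bar>"
proof (cases "3 * \<bar>j - k\<bar> \<le> \<bar>k\<bar>")
  case True
  have "real_of_int (3 * \<bar>j - k\<bar>) \<le> real_of_int \<bar>k\<bar>" using True by (simp only: of_int_le_iff)
  hence "real_of_int \<bar>j + k\<bar> \<le> 7/3 * \<bar>real_of_int k\<bar>" by (simp; smt (verit))
  hence "real_of_int \<bar>j + k\<bar> * cmod (\<gamma> k - \<gamma> j) \<le> (7/3 * \<bar>real_of_int k\<bar>) * cmod (\<gamma> k - \<gamma> j)"
    by (rule mult_right_mono) simp
  also have "\<dots> = 7/3 * (\<bar>real_of_int k\<bar> * cmod (\<gamma> k - \<gamma> j))" by simp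
  also have "\<dots> \<le> 7/3 * (real_of_int \<bar>j - k\<bar> * (3/2 * B1))"
    using difference_decay_near[OF True] by (rule mult_left_mono) simp
  also have "\<dots> \<le> (14 * G + 4 * B1) * real_of_int \<bar>j - k\<bar>"
    using G_nonneg B1_nonneg by (simp add: algebra_simps)
  finally show ?thesis .
next
  case False
  have "real_of_int \<bar>k\<bar> < real_of_int (3 * \<bar>j - k\<bar>)" using False by (simp only: of_int_less_iff not_le)
  hence "real_of_int \<bar>j + k\<bar> \<le> 7 * real_of_int \<bar>j - k\<bar>" by (simp; smt (verit))
  moreover have "cmod (\<gamma> k - \<gamma> j) \<le> 2 * G"
    using norm_triangle_ineq4[of "\<gamma> k" "\<gamma> j"] bounded[of k] bounded[of j] by linarith
  ultimately have "real_of_int \<bar>j + k\<bar> * cmod (\<gamma> k - \<gamma> j) \<le> (7 * real_of_int \<bar>j - k\<bar>) * (2 * G)"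
    by (intro mult_mono) simp_all
  also have "\<dots> \<le> (14 * G + 4 * B1) * real_of_int \<bar>j - k\<bar>"
    using G_nonneg B1_nonneg by (simp add: algebra_simps)
  finally show ?thesis .
qed

text \<open>The second commutator of \<open>A\<^sub>a\<close> with \<open>D\<^sub>\<gamma>\<close> has entries
  \<open>\<Sum>\<^sub>k a\<^sup>-\<^sup>|\<^sup>j\<^sup>-\<^sup>k\<^sup>| a\<^sup>-\<^sup>|\<^sup>k\<^sup>-\<^sup>l\<^sup>| pair_term j l k / 4\<close>; the weights are invariant
  under the reflection \<open>k \<mapsto> j + l - k\<close>, and pairing \<open>k\<close> with its reflection cancels the
  first-order Taylor terms of \<open>\<gamma>\<close>.\<close>

definition pair_term :: "int \<Rightarrow> int \<Rightarrow> int \<Rightarrow> complex" where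
  "pair_term j l x = of_int ((j + x) * (x + l)) * (\<gamma> j - 2 * \<gamma> x + \<gamma> l)"

lemma pair_term_reflection_identity:
  "pair_term j l k + pair_term j l (j + l - k)
    = of_int (2 * (j + l) * (2 * k - j - l)\<^sup>2) * Delta \<gamma> k
      + of_int ((j + k) * (k + l)) * (taylor_rem k j k - taylor_rem k k l)
      + of_int ((j + (j + l - k)) * ((j + l - k) + l))
          * (taylor_rem k j (j + l - k) - taylor_rem k (j + l - k) l)"
  unfolding pair_term_def taylor_rem_def by (simp add: algebra_simps power2_eq_square)

lemma norm_pair_term_le:
  assumes "real_of_int \<bar>j + x\<bar> \<le> c" "real_of_int \<bar>x + l\<bar> \<le> c"
  shows "cmod (pair_term j l x) \<le> c\<^sup>2 * (4 * G)"
proof -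
  have "cmod (\<gamma> j - 2 * \<gamma> x + \<gamma> l) \<le> cmod (\<gamma> j) + 2 * cmod (\<gamma> x) + cmod (\<gamma> l)"
    using norm_triangle_ineq[of "\<gamma> j - 2 * \<gamma> x" "\<gamma> l"] norm_triangle_ineq4[of "\<gamma> j" "2 * \<gamma> x"]
    by (simp add: norm_mult)
  also have "\<dots> \<le> 4 * G" using bounded[of j] bounded[of x] bounded[of l] by simp
  finally have "cmod (\<gamma> j - 2 * \<gamma> x + \<gamma> l) \<le> 4 * G" .
  hence "cmod (pair_term j l x) \<le> (c * c) * (4 * G)"
    unfolding pair_term_def norm_mult norm_of_int of_int_abs[symmetric] abs_mult of_int_mult
    by (intro mult_mono) (use assms in \<open>auto intro: mult_mono\<close>)
  thus ?thesis by (simp add: power2_eq_square)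
qed

lemma mult_norm_of_int_mult:
  fixes a b :: int and K :: real and z :: complex
  shows "K\<^sup>2 * cmod (of_int (a * b) * z) = real_of_int \<bar>a\<bar> * real_of_int \<bar>b\<bar> * (K\<^sup>2 * cmod z)"
  by (simp add: norm_mult abs_mult)

lemma mult_norm_of_int_mult_le:
  fixes a b :: int and K c R :: real and z :: complex
  assumes "real_of_int \<bar>a\<bar> \<le> c * \<bar>K\<bar>" "real_of_int \<bar>b\<bar> \<le> c * \<bar>K\<bar>" "K\<^sup>2 * cmod z \<le> R"
  shows "K\<^sup>2 * cmod (of_int (a * b) * z) \<le> (c * \<bar>K\<bar>) * (c * \<bar>K\<bar>) * R"
  unfolding mult_norm_of_int_mult using assms
  by (intro mult_mono) (auto intro: mult_mono order_trans[OF zero_le_mult_iff[THEN iffD2]])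

lemma Delta_term_far_from_origin:
  fixes j k l D :: int
  assumes "real_of_int \<bar>2 * (j + l)\<bar> \<le> 14/3 * \<bar>real_of_int k\<bar>" "real_of_int \<bar>2 * k - j - l\<bar> \<le> real_of_int D"
  shows "(real_of_int k)\<^sup>2 * cmod (of_int (2 * (j + l) * (2 * k - j - l)\<^sup>2) * Delta \<gamma> k)
    \<le> (14/3 * \<bar>real_of_int k\<bar>) * (real_of_int D)\<^sup>2 * (\<bar>real_of_int k\<bar> * B1)"
proof -
  have "(real_of_int k)\<^sup>2 * cmod (Delta \<gamma> k) = \<bar>real_of_int k\<bar> * (\<bar>real_of_int k\<bar> * cmod (Delta \<gamma> k))"
    by (simp add: power2_eq_square)
  also have "\<dots> \<le> \<bar>real_of_int k\<bar> * B1"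
    using Delta_decay[of k] by (intro mult_left_mono) (simp_all add: norm_mult)
  finally have Delta: "(real_of_int k)\<^sup>2 * cmod (Delta \<gamma> k) \<le> \<bar>real_of_int k\<bar> * B1" .
  have "(real_of_int \<bar>2 * k - j - l\<bar>)\<^sup>2 \<le> (real_of_int D)\<^sup>2" by (intro power_mono assms(2)) simp
  hence square: "real_of_int \<bar>(2 * k - j - l)\<^sup>2\<bar> \<le> (real_of_int D)\<^sup>2" by simp
  show ?thesis unfolding mult_norm_of_int_mult
    by (rule mult_mono[OF mult_mono[OF assms(1) square] Delta]) (use B1_nonneg in auto)
qed

lemma pair_term_sum_near_origin:
  fixes j k l :: int
  defines "D \<equiv> \<bar>j - k\<bar> + \<bar>k - l\<bar>"
  assumes near: "\<bar>k\<bar> < 3 * D"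
  shows "cmod (pair_term j l k + pair_term j l (j + l - k)) \<le> 1096 * G * (real_of_int D)\<^sup>2"
proof -
  have k: "real_of_int \<bar>j + k\<bar> \<le> 7 * real_of_int D" "real_of_int \<bar>k + l\<bar> \<le> 7 * real_of_int D"
    and k': "real_of_int \<bar>j + (j + l - k)\<bar> \<le> 15 * real_of_int D"
      "real_of_int \<bar>(j + l - k) + l\<bar> \<le> 15 * real_of_int D"
    using near[folded of_int_less_iff[where 'a=real]] unfolding D_def by (simp_all, (smt (verit))+)
  have "cmod (pair_term j l k + pair_term j l (j + l - k))
      \<le> (7 * real_of_int D)\<^sup>2 * (4 * G) + (15 * real_of_int D)\<^sup>2 * (4 * G)"
    using norm_triangle_ineq[of "pair_term j l k" "pair_term j l (j + l - k)"]
      norm_pair_term_le[OF k] norm_pair_term_le[OF k'] by linarith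
  also have "\<dots> = 1096 * G * (real_of_int D)\<^sup>2" by (simp add: power_mult_distrib)
  finally show ?thesis .
qed

lemma pair_term_sum_far_from_origin:
  fixes j k l :: int
  defines "D \<equiv> \<bar>j - k\<bar> + \<bar>k - l\<bar>"
  assumes kj: "k \<noteq> j" and far: "3 * D \<le> \<bar>k\<bar>"
  shows "cmod (pair_term j l k + pair_term j l (j + l - k)) \<le> (5 * B1 + 32 * B2) * (real_of_int D)\<^sup>2"
proof -
  define k' where "k' = j + l - k"
  define K where "K = real_of_int k"
  have "D \<ge> 1" using kj unfolding D_def by simp
  hence K2_pos: "K\<^sup>2 > 0" using far unfolding K_def by simp
  have factors: "real_of_int \<bar>j + k\<bar> \<le> 8/3 * \<bar>K\<bar>" "real_of_int \<bar>k + l\<bar> \<le> 8/3 * \<bar>K\<bar>"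
    "real_of_int \<bar>j + k'\<bar> \<le> 8/3 * \<bar>K\<bar>" "real_of_int \<bar>k' + l\<bar> \<le> 8/3 * \<bar>K\<bar>"
    "real_of_int \<bar>2 * (j + l)\<bar> \<le> 14/3 * \<bar>K\<bar>" "real_of_int \<bar>2 * k - j - l\<bar> \<le> real_of_int D"
    using far[folded of_int_le_iff[where 'a=real]] unfolding K_def D_def k'_def
    by (simp_all, (smt (verit))+)
  have rem1: "K\<^sup>2 * cmod (taylor_rem k j k - taylor_rem k k l) \<le> (real_of_int D)\<^sup>2 * (9/4 * B2)"
    unfolding K_def by (rule taylor_rem_pair_decay_near[OF _ _ _ _ far]) (simp_all add: D_def; linarith)+
  have rem2: "K\<^sup>2 * cmod (taylor_rem k j k' - taylor_rem k k' l) \<le> (real_of_int D)\<^sup>2 * (9/4 * B2)"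
    unfolding K_def by (rule taylor_rem_pair_decay_near[OF _ _ _ _ far])
      (simp_all add: D_def k'_def; linarith)+
  have triangle: "K\<^sup>2 * cmod (x + y + z) \<le> K\<^sup>2 * cmod x + K\<^sup>2 * cmod y + K\<^sup>2 * cmod z" for x y z
    using mult_left_mono[OF norm_triangle_mono[OF norm_triangle_ineq order_refl], of "K\<^sup>2" x y z]
    by (simp add: distrib_left)
  have "K\<^sup>2 * cmod (pair_term j l k + pair_term j l k')
      \<le> (14/3 * \<bar>K\<bar>) * (real_of_int D)\<^sup>2 * (\<bar>K\<bar> * B1)
        + (8/3 * \<bar>K\<bar>) * (8/3 * \<bar>K\<bar>) * ((real_of_int D)\<^sup>2 * (9/4 * B2))
        + (8/3 * \<bar>K\<bar>) * (8/3 * \<bar>K\<bar>) * ((real_of_int D)\<^sup>2 * (9/4 * B2))"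
    unfolding pair_term_reflection_identity[of j l k, folded k'_def]
    by (rule order.trans[OF triangle add_mono[OF add_mono[OF
          Delta_term_far_from_origin[OF factors(5,6)[unfolded K_def], folded K_def]
          mult_norm_of_int_mult_le[OF factors(1,2) rem1]] mult_norm_of_int_mult_le[OF factors(3,4) rem2]]])
  also have "\<dots> = K\<^sup>2 * ((14/3 * B1 + 32 * B2) * (real_of_int D)\<^sup>2)"
    by (simp add: power2_eq_square algebra_simps)
  also have "\<dots> \<le> K\<^sup>2 * ((5 * B1 + 32 * B2) * (real_of_int D)\<^sup>2)"
    using B1_nonneg B2_nonneg by (intro mult_left_mono mult_right_mono) auto
  finally show ?thesis using K2_pos unfolding k'_def by simp
qed

definition CE :: real where "CE = 1096 * G + 5 * B1 + 32 * B2"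

lemma CE_nonneg: "CE \<ge> 0"
  unfolding CE_def using G_nonneg B1_nonneg B2_nonneg by simp

lemma pair_term_sum_bound:
  fixes j k l :: int
  assumes "k \<noteq> j"
  shows "cmod (pair_term j l k + pair_term j l (j + l - k)) \<le> CE * (real_of_int (\<bar>j - k\<bar> + \<bar>k - l\<bar>))\<^sup>2"
proof (cases "\<bar>k\<bar> < 3 * (\<bar>j - k\<bar> + \<bar>k - l\<bar>)")
  case True
  thus ?thesis using pair_term_sum_near_origin[OF True] B1_nonneg B2_nonneg
    unfolding CE_def by (smt (verit) mult_right_mono zero_le_power2)
next
  case False
  thus ?thesis using pair_term_sum_far_from_origin[OF assms] G_nonneg
    unfolding CE_def by (smt (verit) mult_right_mono zero_le_power2 not_less)
qed

end

section \<open>The matrices of \<open>A\<^sub>a\<close> and of its commutators with \<open>D\<^sub>\<gamma>\<close>\<close>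

text \<open>With \<open>\<tau> = a\<^sup>-\<^sup>1\<^sup>/\<^sup>4\<close> the weights \<open>a\<^sup>-\<^sup>|\<^sup>n\<^sup>| = \<tau>\<^sup>4\<^sup>|\<^sup>n\<^sup>|\<close> still leave a factor \<open>\<tau>\<^sup>3\<^sup>|\<^sup>n\<^sup>|\<close> to
  absorb the polynomial growth of the matrix entries, so that all matrices below are dominated
  by multiples of the summable kernel \<open>\<tau>\<^sup>|\<^sup>n\<^sup>|\<close>.\<close>

locale commutator_setting = q2_decay +
  fixes a :: real
  assumes a_gt_1: "a > 1"
begin

definition tau :: real where "tau = root 4 (inverse a)"
definition geo :: "int \<Rightarrow> real" where "geo n = tau ^ nat \<bar>n\<bar>"
definition weight :: "int \<Rightarrow> real" where "weight n = tau ^ (4 * nat \<bar>n\<bar>)"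
definition L :: real where "L = 1 / (1 - tau)"

definition entry :: "int \<Rightarrow> int \<Rightarrow> real" where
  "entry j k = (if j = k then 0 else weight (j - k) * real_of_int (j + k) / 2)"
definition A_entry :: "int \<Rightarrow> int \<Rightarrow> complex" where
  "A_entry j k = complex_of_real (entry j k)"
definition comm_entry :: "int \<Rightarrow> int \<Rightarrow> complex" where
  "comm_entry j k = A_entry j k * (\<gamma> k - \<gamma> j)"
definition comm2_entry :: "int \<Rightarrow> int \<Rightarrow> complex" where
  "comm2_entry j l = infsum (\<lambda>k. A_entry j k * comm_entry k l - comm_entry j k * A_entry k l) UNIV"

definition A_kernel :: "int \<Rightarrow> real" where "A_kernel n = (1 + L) * geo n"
definition comm_kernel :: "int \<Rightarrow> real" where "comm_kernel n = ((14 * G + 4 * B1) * L) * geo n"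
definition comm_X_kernel :: "int \<Rightarrow> real" where
  "comm_X_kernel n = ((14 * G + 4 * B1) / 2 * (L + L\<^sup>2)) * geo n"
definition comm2_kernel :: "int \<Rightarrow> real" where
  "comm2_kernel n = (CE * L\<^sup>2 * infsum geo UNIV / 8) * geo n"

lemma tau_pos: "tau > 0"
  unfolding tau_def using a_gt_1 by (simp add: real_root_gt_zero)

lemma tau_less_1: "tau < 1"
  unfolding tau_def using a_gt_1 by (simp add: inverse_eq_divide)

lemma L_pos: "L > 0"
  unfolding L_def using tau_less_1 by simp

lemma comm_const_nonneg: "14 * G + 4 * B1 \<ge> 0"
  using G_nonneg B1_nonneg by simp

lemma geo_nonneg: "geo n \<ge> 0"
  unfolding geo_def using tau_pos by simp

lemma geo_le_1: "geo n \<le> 1"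
  unfolding geo_def using tau_pos tau_less_1 by (simp add: power_le_one)

lemma weight_nonneg: "weight n \<ge> 0"
  unfolding weight_def using tau_pos by simp

lemma geo_minus_commute: "geo (j - k) = geo (k - j)"
  unfolding geo_def by (simp add: abs_minus_commute)

lemma weight_minus_commute: "weight (j - k) = weight (k - j)"
  unfolding weight_def by (simp add: abs_minus_commute)

lemma l1_kernel_geo: "c \<ge> 0 \<Longrightarrow> l1_kernel (\<lambda>n. c * geo n)"
  unfolding geo_def using tau_pos tau_less_1 by (intro l1_kernel_power_abs) auto

lemma geo_summable: "geo summable_on UNIV"
  using l1_kernel_summable[OF l1_kernel_geo[of 1]] by simp

lemma powr_eq_weight: "a powr (- real_of_int \<bar>m\<bar>) = weight m"
proof -
  have "real_of_int \<bar>m\<bar> = real (nat \<bar>m\<bar>)" by simp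
  hence "a powr (- real_of_int \<bar>m\<bar>) = inverse (a powr real (nat \<bar>m\<bar>))"
    by (simp only: powr_minus)
  also have "\<dots> = inverse (a ^ nat \<bar>m\<bar>)" using a_gt_1 by (subst powr_realpow) auto
  also have "\<dots> = (tau ^ 4) ^ nat \<bar>m\<bar>" unfolding tau_def using a_gt_1 by (simp add: power_inverse)
  also have "\<dots> = weight m" unfolding weight_def by (simp add: power_mult)
  finally show ?thesis .
qed

lemma tau_power_decreasing: "d1 \<le> d2 \<Longrightarrow> tau ^ d2 \<le> tau ^ d1"
  using tau_pos tau_less_1 by (intro power_decreasing) auto

lemma real_mult_tau_power_le: "real d * tau ^ d \<le> L"
  unfolding L_def using tau_pos tau_less_1 by (intro real_mult_power_le) auto

lemma linear_tau_power_le: "real d * tau ^ (4 * d) \<le> L * tau ^ d"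
proof -
  have "real d * tau ^ (4 * d) \<le> real d * (tau ^ d * tau ^ d)"
    by (intro mult_left_mono) (auto simp: power_add[symmetric] intro: tau_power_decreasing)
  also have "\<dots> \<le> L * tau ^ d"
    using real_mult_tau_power_le[of d] tau_pos L_pos by (simp add: mult.assoc[symmetric] mult_right_mono)
  finally show ?thesis .
qed

lemma affine_tau_power_le: "tau ^ (4 * d) * (1 + real d) \<le> (1 + L) * tau ^ d"
  using tau_power_decreasing[of d "4 * d"] linear_tau_power_le[of d] by (simp add: algebra_simps)

lemma quadratic_tau_power_le: "(real d)\<^sup>2 * tau ^ (4 * d) \<le> L\<^sup>2 * tau ^ (2 * d)"
proof -
  have "(real d)\<^sup>2 * tau ^ (4 * d) = (real d * tau ^ d) * (real d * tau ^ d) * tau ^ (2 * d)"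
    by (simp add: power2_eq_square power_add[symmetric] mult_ac)
  also have "\<dots> \<le> L * L * tau ^ (2 * d)"
    using real_mult_tau_power_le[of d] tau_pos L_pos by (intro mult_right_mono mult_mono) auto
  finally show ?thesis by (simp add: power2_eq_square)
qed

lemma entry_sym: "entry j k = entry k j"
  unfolding entry_def by (simp add: weight_minus_commute add.commute)

lemma norm_A_entry: "cmod (A_entry j k) = \<bar>entry j k\<bar>"
  unfolding A_entry_def by simp

lemma cnj_A_entry: "cnj (A_entry k j) = A_entry j k"
  unfolding A_entry_def by (simp add: entry_sym)

lemma abs_entry: "j \<noteq> k \<Longrightarrow> \<bar>entry j k\<bar> = weight (j - k) / 2 * real_of_int \<bar>j + k\<bar>"
  unfolding entry_def by (simp add: abs_mult weight_nonneg)

lemma abs_entry_le: "\<bar>entry j k\<bar> \<le> A_kernel (j - k) * (1 + real_of_int \<bar>k\<bar>)"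
proof (cases "j = k")
  case True
  thus ?thesis by (simp add: entry_def A_kernel_def L_pos geo_nonneg less_imp_le)
next
  case False
  define d where "d = nat \<bar>j - k\<bar>"
  have "\<bar>j + k\<bar> \<le> \<bar>j - k\<bar> + \<bar>2 * k\<bar>" using abs_triangle_ineq[of "j - k" "2 * k"] by simp
  hence "real_of_int \<bar>j + k\<bar> \<le> real d + 2 * real_of_int \<bar>k\<bar>" unfolding d_def by simp
  moreover have "real d * real_of_int \<bar>k\<bar> \<ge> 0" "real d \<ge> 0" by simp_all
  ultimately have "real_of_int \<bar>j + k\<bar> / 2 \<le> 1 + real d + real_of_int \<bar>k\<bar> + real d * real_of_int \<bar>k\<bar>"
    by argo
  also have "\<dots> = (1 + real d) * (1 + real_of_int \<bar>k\<bar>)" by (simp add: algebra_simps)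
  finally have "real_of_int \<bar>j + k\<bar> / 2 \<le> (1 + real d) * (1 + real_of_int \<bar>k\<bar>)" .
  hence "\<bar>entry j k\<bar> \<le> (weight (j - k) * (1 + real d)) * (1 + real_of_int \<bar>k\<bar>)"
    using False weight_nonneg[of "j - k"]
    by (simp add: abs_entry mult.assoc mult_left_mono)
  also have "\<dots> \<le> A_kernel (j - k) * (1 + real_of_int \<bar>k\<bar>)"
    using affine_tau_power_le[of d]
    by (intro mult_right_mono) (simp_all add: weight_def A_kernel_def geo_def d_def mult.commute)
  finally show ?thesis .
qed

lemma abs_entry_le': "\<bar>entry j k\<bar> \<le> A_kernel (j - k) * (1 + real_of_int \<bar>j\<bar>)"
  using abs_entry_le[of k j] by (simp add: entry_sym A_kernel_def geo_minus_commute)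

lemma norm_comm_entry_eq:
  "j \<noteq> k \<Longrightarrow> cmod (comm_entry j k) = weight (j - k) / 2 * (real_of_int \<bar>j + k\<bar> * cmod (\<gamma> k - \<gamma> j))"
  unfolding comm_entry_def norm_mult norm_A_entry by (simp add: abs_entry)

lemma norm_comm_entry_le_weight:
  "cmod (comm_entry j k) \<le> (14 * G + 4 * B1) / 2 * (real (nat \<bar>j - k\<bar>) * tau ^ (4 * nat \<bar>j - k\<bar>))"
proof (cases "j = k")
  case True
  thus ?thesis by (simp add: comm_entry_def A_entry_def entry_def)
next
  case False
  have "cmod (comm_entry j k) \<le> weight (j - k) / 2 * ((14 * G + 4 * B1) * real_of_int \<bar>j - k\<bar>)"
    unfolding norm_comm_entry_eq[OF False]
    by (intro mult_left_mono weighted_difference_bound) (simp add: weight_nonneg)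
  thus ?thesis by (simp add: weight_def mult_ac)
qed

lemma norm_comm_entry_le: "cmod (comm_entry j k) \<le> comm_kernel (j - k)"
proof -
  have "cmod (comm_entry j k) \<le> (14 * G + 4 * B1) / 2 * (L * geo (j - k))"
    unfolding geo_def
    by (rule order.trans[OF norm_comm_entry_le_weight mult_left_mono[OF linear_tau_power_le]])
       (use comm_const_nonneg in simp)
  also have "\<dots> \<le> comm_kernel (j - k)"
    unfolding comm_kernel_def using comm_const_nonneg L_pos geo_nonneg[of "j - k"] by simp
  finally show ?thesis .
qed

lemma abs_mult_norm_comm_entry_le:
  "real_of_int \<bar>j\<bar> * cmod (comm_entry j k) \<le> comm_X_kernel (j - k) * (1 + real_of_int \<bar>k\<bar>)"
proof -
  define d where "d = nat \<bar>j - k\<bar>"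
  define C where "C = 14 * G + 4 * B1"
  have C: "C \<ge> 0" unfolding C_def by (rule comm_const_nonneg)
  have "\<bar>j\<bar> \<le> \<bar>k\<bar> + \<bar>j - k\<bar>" using abs_triangle_ineq[of k "j - k"] by simp
  hence j: "real_of_int \<bar>j\<bar> \<le> real_of_int \<bar>k\<bar> + real d" unfolding d_def by simp
  have "real_of_int \<bar>j\<bar> * cmod (comm_entry j k)
      \<le> (real_of_int \<bar>k\<bar> + real d) * (C / 2 * (real d * tau ^ (4 * d)))"
    using norm_comm_entry_le_weight[of j k] j tau_pos C
    unfolding C_def[symmetric] d_def[symmetric] by (intro mult_mono) auto
  also have "\<dots> = C / 2 * (real_of_int \<bar>k\<bar> * (real d * tau ^ (4 * d)) + (real d)\<^sup>2 * tau ^ (4 * d))"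
    by (simp add: algebra_simps power2_eq_square)
  also have "\<dots> \<le> C / 2 * (real_of_int \<bar>k\<bar> * (L * tau ^ d) + L\<^sup>2 * tau ^ d)"
  proof -
    have "(real d)\<^sup>2 * tau ^ (4 * d) \<le> L\<^sup>2 * tau ^ d"
      by (rule order.trans[OF quadratic_tau_power_le mult_left_mono[OF tau_power_decreasing]]) simp_all
    thus ?thesis using C by (intro mult_left_mono add_mono linear_tau_power_le) auto
  qed
  also have "\<dots> \<le> C / 2 * ((L + L\<^sup>2) * tau ^ d * (1 + real_of_int \<bar>k\<bar>))"
  proof -
    have "(L + L\<^sup>2) * tau ^ d * (1 + real_of_int \<bar>k\<bar>)
        = (real_of_int \<bar>k\<bar> * (L * tau ^ d) + L\<^sup>2 * tau ^ d) + (L * tau ^ d + L\<^sup>2 * real_of_int \<bar>k\<bar> * tau ^ d)"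
      by (simp add: algebra_simps)
    moreover have "0 \<le> L * tau ^ d + L\<^sup>2 * real_of_int \<bar>k\<bar> * tau ^ d" using L_pos tau_pos by simp
    ultimately show ?thesis using C by (intro mult_left_mono) auto
  qed
  also have "\<dots> = comm_X_kernel (j - k) * (1 + real_of_int \<bar>k\<bar>)"
    unfolding comm_X_kernel_def geo_def d_def C_def by simp
  finally show ?thesis .
qed

lemma comm2_summand_eq:
  "A_entry j k * comm_entry k l - comm_entry j k * A_entry k l
    = complex_of_real (entry j k * entry k l) * (\<gamma> j - 2 * \<gamma> k + \<gamma> l)"
  unfolding comm_entry_def A_entry_def by (simp add: algebra_simps)

lemma comm2_summand_summable:
  "(\<lambda>k. A_entry j k * comm_entry k l - comm_entry j k * A_entry k l) summable_on UNIV"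
proof -
  define c where "c = (1 + L) * (1 + real_of_int \<bar>j\<bar>) * ((1 + L) * (1 + real_of_int \<bar>l\<bar>)) * (4 * G)"
  have "norm (A_entry j k * comm_entry k l - comm_entry j k * A_entry k l) \<le> c * geo (j - k)" for k
  proof -
    have "\<bar>entry k l\<bar> \<le> A_kernel (k - l) * (1 + real_of_int \<bar>l\<bar>)" by (rule abs_entry_le)
    also have "\<dots> \<le> (1 + L) * (1 + real_of_int \<bar>l\<bar>)"
      unfolding A_kernel_def using geo_le_1[of "k - l"] L_pos by (intro mult_right_mono) auto
    finally have "\<bar>entry k l\<bar> \<le> (1 + L) * (1 + real_of_int \<bar>l\<bar>)" .
    moreover have "cmod (\<gamma> j - 2 * \<gamma> k + \<gamma> l) \<le> 4 * G"
      using norm_triangle_ineq[of "\<gamma> j - 2 * \<gamma> k" "\<gamma> l"] norm_triangle_ineq4[of "\<gamma> j" "2 * \<gamma> k"]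
        bounded[of j] bounded[of k] bounded[of l] by (simp add: norm_mult)
    ultimately have "\<bar>entry j k\<bar> * \<bar>entry k l\<bar> * cmod (\<gamma> j - 2 * \<gamma> k + \<gamma> l)
        \<le> (A_kernel (j - k) * (1 + real_of_int \<bar>j\<bar>)) * ((1 + L) * (1 + real_of_int \<bar>l\<bar>)) * (4 * G)"
      using L_pos by (intro mult_mono abs_entry_le')
        (auto simp: A_kernel_def intro!: mult_nonneg_nonneg geo_nonneg)
    also have "\<dots> = c * geo (j - k)" unfolding c_def A_kernel_def by (simp only: mult_ac)
    finally show ?thesis unfolding comm2_summand_eq by (simp add: norm_mult abs_mult)
  qed
  thus ?thesis unfolding summable_on_iff_abs_summable_on_complex
    by (intro summable_on_comparison_test[OF summable_on_cmult_right[OF summable_on_reflect[OF geo_summable]]])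
       auto
qed

lemma comm2_summand_pair_eq:
  fixes j k l :: int
  defines "k' \<equiv> j + l - k"
  assumes "k \<noteq> j" "k \<noteq> l"
  shows "(A_entry j k * comm_entry k l - comm_entry j k * A_entry k l)
            + (A_entry j k' * comm_entry k' l - comm_entry j k' * A_entry k' l)
    = complex_of_real (weight (j - k) * weight (k - l) / 4) * (pair_term j l k + pair_term j l k')"
proof -
  have "weight (j - k') = weight (k - l)" "weight (k' - l) = weight (j - k)"
    unfolding k'_def by (simp_all add: algebra_simps)
  hence products:
    "entry j k * entry k l = weight (j - k) * weight (k - l) / 4 * real_of_int ((j + k) * (k + l))"
    "entry j k' * entry k' l = weight (j - k) * weight (k - l) / 4 * real_of_int ((j + k') * (k' + l))"
    using assms(2,3) unfolding entry_def k'_def by auto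
  show ?thesis
    unfolding comm2_summand_eq products pair_term_def of_real_mult of_real_of_int_eq
    by (simp only: distrib_left mult.assoc)
qed

lemma comm2_summand_pair_bound:
  fixes j k l :: int
  defines "k' \<equiv> j + l - k"
  shows "cmod ((A_entry j k * comm_entry k l - comm_entry j k * A_entry k l)
            + (A_entry j k' * comm_entry k' l - comm_entry j k' * A_entry k' l))
         \<le> CE / 4 * L\<^sup>2 * (geo (j - l) * geo (j - k))"
proof (cases "k = j \<or> k = l")
  case True
  hence "entry j k * entry k l = 0" "entry j k' * entry k' l = 0" by (auto simp: entry_def k'_def)
  hence "A_entry j k * comm_entry k l - comm_entry j k * A_entry k l = 0"
    "A_entry j k' * comm_entry k' l - comm_entry j k' * A_entry k' l = 0"
    unfolding comm2_summand_eq by (simp_all only: of_real_0 mult_zero_left)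
  thus ?thesis using CE_nonneg L_pos geo_nonneg by simp
next
  case False
  define d where "d = nat \<bar>j - k\<bar> + nat \<bar>k - l\<bar>"
  from False have "k \<noteq> j" "k \<noteq> l" by auto
  hence "cmod ((A_entry j k * comm_entry k l - comm_entry j k * A_entry k l)
            + (A_entry j k' * comm_entry k' l - comm_entry j k' * A_entry k' l))
      = weight (j - k) * weight (k - l) / 4 * cmod (pair_term j l k + pair_term j l k')"
    unfolding comm2_summand_pair_eq[OF \<open>k \<noteq> j\<close> \<open>k \<noteq> l\<close>, folded k'_def] norm_mult norm_of_real
    using weight_nonneg by simp
  also have "\<dots> \<le> weight (j - k) * weight (k - l) / 4 * (CE * (real d)\<^sup>2)"
    using pair_term_sum_bound[of k j l] False weight_nonneg
    unfolding k'_def d_def by (intro mult_left_mono) simp_all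
  also have "\<dots> = CE / 4 * ((real d)\<^sup>2 * tau ^ (4 * d))"
    unfolding weight_def d_def by (simp add: power_add distrib_left)
  also have "\<dots> \<le> CE / 4 * (L\<^sup>2 * (tau ^ d * tau ^ d))"
    using quadratic_tau_power_le[of d] CE_nonneg by (simp add: mult_2 power_add mult_left_mono)
  also have "\<dots> \<le> CE / 4 * (L\<^sup>2 * (geo (j - l) * geo (j - k)))"
    unfolding geo_def d_def using CE_nonneg tau_pos
    by (intro mult_left_mono mult_mono tau_power_decreasing) auto
  finally show ?thesis by (simp add: mult.assoc)
qed

lemma norm_comm2_entry_le: "cmod (comm2_entry j l) \<le> comm2_kernel (j - l)"
proof -
  let ?F = "\<lambda>k. A_entry j k * comm_entry k l - comm_entry j k * A_entry k l"
  let ?F' = "\<lambda>k. ?F (j + l - k)"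
  have S: "?F summable_on UNIV" by (rule comm2_summand_summable)
  have "?F' summable_on UNIV \<longleftrightarrow> ?F summable_on UNIV"
    by (rule summable_on_reindex_bij_witness[where i="\<lambda>k. j + l - k" and j="\<lambda>k. j + l - k"]) auto
  hence S': "?F' summable_on UNIV" using S by simp
  have "infsum ?F' UNIV = infsum ?F UNIV"
    by (rule infsum_reindex_bij_witness[where i="\<lambda>k. j + l - k" and j="\<lambda>k. j + l - k"]) auto
  hence "2 * comm2_entry j l = infsum (\<lambda>k. ?F k + ?F' k) UNIV"
    unfolding comm2_entry_def using infsum_add[OF S S'] by simp
  hence "2 * cmod (comm2_entry j l) = cmod (infsum (\<lambda>k. ?F k + ?F' k) UNIV)"
    by (metis norm_mult norm_numeral)
  also have "\<dots> \<le> infsum (\<lambda>k. CE / 4 * L\<^sup>2 * geo (j - l) * geo (j - k)) UNIV"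
    by (rule norm_infsum_le[OF has_sum_infsum[OF summable_on_add[OF S S']]
          has_sum_infsum[OF summable_on_cmult_right[OF summable_on_reflect[OF geo_summable]]]])
       (use comm2_summand_pair_bound in \<open>simp add: mult.assoc\<close>)
  also have "\<dots> = CE / 4 * L\<^sup>2 * geo (j - l) * infsum geo UNIV"
    by (simp only: infsum_cmult_right' infsum_reflect)
  finally show ?thesis unfolding comm2_kernel_def by (simp add: algebra_simps)
qed

end

section \<open>From \<open>D(X)\<close> to \<open>D(A\<^sub>a)\<close>\<close>

context commutator_setting
begin

lemma A0_eq_matrix_op: "A0 a f = matrix_op A_entry f"
proof
  fix k
  have "A0 a f k = infsum (\<lambda>m. 1/2 * (complex_of_real (a powr (- real_of_int \<bar>m\<bar>)) *
                 (Tpow m (Xop f) k + Xop (Tpow m f) k))) {m. m \<noteq> 0}"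
    unfolding A0_def by (simp only: infsum_cmult_right')
  also have "\<dots> = infsum (\<lambda>j. 1/2 * (complex_of_real (a powr (- real_of_int \<bar>k - j\<bar>)) *
                 (Tpow (k - j) (Xop f) k + Xop (Tpow (k - j) f) k))) {j. j \<noteq> k}"
    by (rule infsum_reindex_bij_witness[where i="\<lambda>m. k - m" and j="\<lambda>j. k - j"]) auto
  also have "\<dots> = infsum (\<lambda>j. A_entry k j * f j) UNIV"
  proof (rule infsum_cong_neutral)
    fix j assume "j \<in> {j. j \<noteq> k} \<inter> UNIV"
    thus "1/2 * (complex_of_real (a powr (- real_of_int \<bar>k - j\<bar>)) *
        (Tpow (k - j) (Xop f) k + Xop (Tpow (k - j) f) k)) = A_entry k j * f j"
      unfolding powr_eq_weight A_entry_def entry_def Tpow_def Xop_def by (simp add: algebra_simps)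
  qed (auto simp: A_entry_def entry_def)
  finally show "A0 a f k = matrix_op A_entry f k" unfolding matrix_op_def .
qed

definition graph_weight :: "vec \<Rightarrow> vec" where
  "graph_weight f = (\<lambda>k. complex_of_real (cmod (f k) + cmod (of_int k * f k)))"

lemma domX_l2: "f \<in> domX \<Longrightarrow> l2 f"
  by (simp add: domX_def)

lemma l2_graph_weight: "f \<in> domX \<Longrightarrow> l2 (graph_weight f)"
  using l2_add[OF l2_of_real_norm l2_of_real_norm, of f "Xop f"]
  unfolding domX_def graph_weight_def Xop_def by simp

lemma norm_graph_weight: "cmod (graph_weight f k) = cmod (f k) + cmod (of_int k * f k)"
  unfolding graph_weight_def norm_of_real by (rule abs_of_nonneg) simp

lemma A_kernel_l1: "l1_kernel A_kernel"
  unfolding A_kernel_def[abs_def] using L_pos by (intro l1_kernel_geo) simp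

lemma A_kernel_row_l1: "l1_kernel (\<lambda>n. (1 + real_of_int \<bar>j\<bar>) * A_kernel n)"
  unfolding A_kernel_def using L_pos by (simp only: mult.assoc[symmetric]) (intro l1_kernel_geo, simp)

lemma comm_kernel_l1: "l1_kernel comm_kernel"
  unfolding comm_kernel_def[abs_def] using L_pos comm_const_nonneg by (intro l1_kernel_geo) simp

lemma comm_X_kernel_l1: "l1_kernel comm_X_kernel"
  unfolding comm_X_kernel_def[abs_def] using L_pos comm_const_nonneg by (intro l1_kernel_geo) simp

lemma comm2_kernel_l1: "l1_kernel comm2_kernel"
  unfolding comm2_kernel_def[abs_def] using L_pos CE_nonneg
  by (intro l1_kernel_geo) (simp add: infsum_nonneg geo_nonneg)

lemma norm_A_entry_mult_le: "cmod (A_entry j k * f k) \<le> A_kernel (j - k) * cmod (graph_weight f k)"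
proof -
  have "cmod (A_entry j k * f k) \<le> (A_kernel (j - k) * (1 + real_of_int \<bar>k\<bar>)) * cmod (f k)"
    unfolding norm_mult norm_A_entry by (intro mult_right_mono abs_entry_le) simp
  thus ?thesis unfolding norm_graph_weight by (simp add: norm_mult algebra_simps)
qed

lemma norm_A_entry_mult_le_row:
  "cmod (A_entry j k * u k) \<le> ((1 + real_of_int \<bar>j\<bar>) * A_kernel (j - k)) * cmod (u k)"
  unfolding norm_mult norm_A_entry using abs_entry_le'[of j k]
  by (intro mult_right_mono) (simp_all add: mult.commute)

lemma A_entry_row_summable: "l2 u \<Longrightarrow> (\<lambda>k. A_entry j k * u k) summable_on UNIV"
  by (rule infsum_le_kernel_conv(1)[OF A_kernel_row_l1[of j] _ norm_A_entry_mult_le_row])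

lemma l2_A_matrix_op: "f \<in> domX \<Longrightarrow> l2 (matrix_op A_entry f)"
  unfolding matrix_op_def
  using l2_le_kernel_conv(1)[OF A_kernel_l1 l2_graph_weight infsum_le_kernel_conv(2)[OF A_kernel_l1
        l2_graph_weight norm_A_entry_mult_le]] by blast

lemma A_matrix_op_symmetric:
  assumes \<phi>: "\<phi> \<in> domX" and u: "l2 u"
  shows "l2inner (matrix_op A_entry \<phi>) u = l2inner \<phi> (matrix_op A_entry u)"
proof -
  let ?F = "\<lambda>k j. cnj (A_entry k j * \<phi> j) * u k"
  have pairs: "(\<lambda>(k, j). ?F k j) summable_on UNIV \<times> UNIV"
    by (rule summable_on_pairs_bilinear[OF A_kernel_l1 l2_graph_weight[OF \<phi>] u])
       (use norm_A_entry_mult_le in \<open>simp add: norm_mult mult_right_mono\<close>)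
  have "l2inner (matrix_op A_entry \<phi>) u = infsum (\<lambda>k. infsum (\<lambda>j. ?F k j) UNIV) UNIV"
    unfolding l2inner_def matrix_op_def by (simp only: infsum_cnj[symmetric] infsum_cmult_left')
  also have "\<dots> = infsum (\<lambda>j. infsum (\<lambda>k. ?F k j) UNIV) UNIV"
    by (rule infsum_swap_banach[OF pairs])
  also have "\<dots> = infsum (\<lambda>j. cnj (\<phi> j) * infsum (\<lambda>k. A_entry j k * u k) UNIV) UNIV"
  proof (rule infsum_cong)
    fix j
    have "?F k j = cnj (\<phi> j) * (A_entry j k * u k)" for k
      unfolding complex_cnj_mult cnj_A_entry by (simp only: mult_ac)
    thus "infsum (\<lambda>k. ?F k j) UNIV = cnj (\<phi> j) * infsum (\<lambda>k. A_entry j k * u k) UNIV"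
      by (simp only: infsum_cmult_right')
  qed
  also have "\<dots> = l2inner \<phi> (matrix_op A_entry u)" unfolding l2inner_def matrix_op_def ..
  finally show ?thesis .
qed

lemma norm_Dop_le: "cmod (Dop \<gamma> f k) \<le> cmod (complex_of_real G * f k)"
  unfolding Dop_def using bounded[of k] G_nonneg by (simp add: norm_mult mult_right_mono)

lemma l2_Dop: "l2 f \<Longrightarrow> l2 (Dop \<gamma> f)"
  by (rule l2_dominated[OF l2_scale norm_Dop_le])

lemma Dop_bounded: "bounded_op (Dop \<gamma>)"
proof -
  have "l2norm (Dop \<gamma> f) \<le> G * l2norm f" if "l2 f" for f
  proof -
    have "l2norm (Dop \<gamma> f) \<le> l2norm (\<lambda>k. complex_of_real G * f k)"
      by (rule l2norm_mono[OF l2_scale[OF that]]) (rule norm_Dop_le)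
    thus ?thesis using l2norm_scale[OF that, of "complex_of_real G"] G_nonneg by simp
  qed
  moreover have "Dop \<gamma> (\<lambda>k. f k + c * g k) = (\<lambda>k. Dop \<gamma> f k + c * Dop \<gamma> g k)" for f g c
    unfolding Dop_def by (simp add: algebra_simps)
  ultimately show ?thesis unfolding bounded_op_def using l2_Dop by blast
qed

lemma Dop_domX: "\<psi> \<in> domX \<Longrightarrow> Dop \<gamma> \<psi> \<in> domX"
proof -
  have "Xop (Dop \<gamma> \<psi>) = Dop \<gamma> (Xop \<psi>)" unfolding Xop_def Dop_def by (simp add: algebra_simps)
  thus "\<psi> \<in> domX \<Longrightarrow> Dop \<gamma> \<psi> \<in> domX" unfolding domX_def by (simp add: l2_Dop)
qed

lemma comm_entry_dominated: "kernel_dominated comm_kernel comm_entry"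
  unfolding kernel_dominated_def using comm_kernel_l1 norm_comm_entry_le by blast

lemma comm2_entry_dominated: "kernel_dominated comm2_kernel comm2_entry"
  unfolding kernel_dominated_def using comm2_kernel_l1 norm_comm2_entry_le by blast

lemma l2_comm_matrix_op: "l2 f \<Longrightarrow> l2 (matrix_op comm_entry f)"
  using matrix_op_bounded(1)[OF comm_entry_dominated] unfolding bounded_op_def by blast

lemma comm_matrix_op_domX:
  assumes \<psi>: "\<psi> \<in> domX"
  shows "matrix_op comm_entry \<psi> \<in> domX"
proof -
  have "cmod (Xop (matrix_op comm_entry \<psi>) j) \<le> kernel_conv comm_X_kernel (graph_weight \<psi>) j" for j
  proof -
    have "Xop (matrix_op comm_entry \<psi>) j = infsum (\<lambda>k. of_int j * (comm_entry j k * \<psi> k)) UNIV"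
      unfolding Xop_def matrix_op_def by (simp only: infsum_cmult_right')
    also have "cmod \<dots> \<le> kernel_conv comm_X_kernel (graph_weight \<psi>) j"
    proof (rule infsum_le_kernel_conv(2)[OF comm_X_kernel_l1 l2_graph_weight[OF \<psi>]])
      fix k
      have "cmod (of_int j * (comm_entry j k * \<psi> k)) = (real_of_int \<bar>j\<bar> * cmod (comm_entry j k)) * cmod (\<psi> k)"
        by (simp add: norm_mult)
      also have "\<dots> \<le> (comm_X_kernel (j - k) * (1 + real_of_int \<bar>k\<bar>)) * cmod (\<psi> k)"
        by (intro mult_right_mono abs_mult_norm_comm_entry_le) simp
      finally show "cmod (of_int j * (comm_entry j k * \<psi> k)) \<le> comm_X_kernel (j - k) * cmod (graph_weight \<psi> k)"
        unfolding norm_graph_weight by (simp add: norm_mult algebra_simps)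
    qed
    finally show ?thesis .
  qed
  hence "l2 (Xop (matrix_op comm_entry \<psi>))"
    by (rule l2_le_kernel_conv(1)[OF comm_X_kernel_l1 l2_graph_weight[OF \<psi>]])
  thus ?thesis using l2_comm_matrix_op[OF domX_l2[OF \<psi>]] unfolding domX_def by simp
qed

lemma commutator_identity:
  assumes \<phi>: "\<phi> \<in> domX" and \<psi>: "\<psi> \<in> domX"
  shows "l2inner (matrix_op A_entry \<phi>) (Dop \<gamma> \<psi>) - l2inner \<phi> (Dop \<gamma> (matrix_op A_entry \<psi>))
    = l2inner \<phi> (matrix_op comm_entry \<psi>)"
proof -
  have l2: "l2 \<phi>" "l2 \<psi>" using \<phi> \<psi> by (simp_all add: domX_l2)
  have pointwise: "matrix_op A_entry (Dop \<gamma> \<psi>) j - Dop \<gamma> (matrix_op A_entry \<psi>) j = matrix_op comm_entry \<psi> j"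
    for j
  proof -
    have "matrix_op A_entry (Dop \<gamma> \<psi>) j - Dop \<gamma> (matrix_op A_entry \<psi>) j
        = infsum (\<lambda>k. A_entry j k * Dop \<gamma> \<psi> k - \<gamma> j * (A_entry j k * \<psi> k)) UNIV"
      unfolding matrix_op_def Dop_def
      by (simp only: infsum_cmult_right' infsum_diff A_entry_row_summable summable_on_cmult_right
          l2_Dop[OF l2(2), unfolded Dop_def] l2(2))
    also have "\<dots> = matrix_op comm_entry \<psi> j"
      unfolding matrix_op_def comm_entry_def Dop_def by (rule infsum_cong) (simp add: algebra_simps)
    finally show ?thesis .
  qed
  have "l2inner (matrix_op A_entry \<phi>) (Dop \<gamma> \<psi>) - l2inner \<phi> (Dop \<gamma> (matrix_op A_entry \<psi>))
      = l2inner \<phi> (matrix_op A_entry (Dop \<gamma> \<psi>)) - l2inner \<phi> (Dop \<gamma> (matrix_op A_entry \<psi>))"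
    using A_matrix_op_symmetric[OF \<phi> l2_Dop[OF l2(2)]] by simp
  also have "\<dots> = l2inner \<phi> (matrix_op comm_entry \<psi>)"
    unfolding pointwise[symmetric]
    by (rule l2inner_diff_right[symmetric, OF l2(1) l2_A_matrix_op[OF Dop_domX[OF \<psi>]]
          l2_Dop[OF l2_A_matrix_op[OF \<psi>]]])
  finally show ?thesis .
qed

lemma second_commutator_terms_summable:
  assumes \<psi>: "\<psi> \<in> domX"
  shows "(\<lambda>(k, l). A_entry j k * (comm_entry k l * \<psi> l) - comm_entry j k * (A_entry k l * \<psi> l))
    summable_on UNIV \<times> UNIV"
proof -
  have "(\<lambda>(k, l). A_entry j k * (comm_entry k l * \<psi> l)) summable_on UNIV \<times> UNIV"
  proof (rule summable_on_pairs_iterated[OF A_kernel_row_l1[of j] comm_kernel_l1 domX_l2[OF \<psi>]])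
    show "cmod (A_entry j k * (comm_entry k l * \<psi> l))
        \<le> (1 + real_of_int \<bar>j\<bar>) * A_kernel (j - k) * comm_kernel (k - l) * cmod (\<psi> l)" for k l
      using norm_A_entry_mult_le_row[of j k "\<lambda>_. 1"] norm_comm_entry_le[of k l]
        l1_kernel_nonneg[OF A_kernel_row_l1[of j], of "j - k"]
      unfolding norm_mult mult.assoc[symmetric] by (intro mult_right_mono mult_mono) auto
  qed
  moreover have "(\<lambda>(k, l). comm_entry j k * (A_entry k l * \<psi> l)) summable_on UNIV \<times> UNIV"
  proof (rule summable_on_pairs_iterated[OF comm_kernel_l1 A_kernel_l1 l2_graph_weight[OF \<psi>]])
    show "cmod (comm_entry j k * (A_entry k l * \<psi> l))
        \<le> comm_kernel (j - k) * A_kernel (k - l) * cmod (graph_weight \<psi> l)" for k l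
      using norm_comm_entry_le[of j k] norm_A_entry_mult_le[of k l \<psi>] unfolding norm_mult mult.assoc
      by (rule mult_mono) (simp_all add: l1_kernel_nonneg[OF comm_kernel_l1])
  qed
  ultimately show ?thesis using summable_on_diff by (fastforce simp: case_prod_unfold)
qed

lemma second_commutator_pointwise:
  assumes \<psi>: "\<psi> \<in> domX"
  shows "matrix_op A_entry (matrix_op comm_entry \<psi>) j - matrix_op comm_entry (matrix_op A_entry \<psi>) j
    = matrix_op comm2_entry \<psi> j"
proof -
  have l2: "l2 \<psi>" using \<psi> by (rule domX_l2)
  let ?A = "\<lambda>k l. A_entry j k * (comm_entry k l * \<psi> l)"
  let ?B = "\<lambda>k l. comm_entry j k * (A_entry k l * \<psi> l)"
  have SA: "(\<lambda>l. ?A k l) summable_on UNIV" and SB: "(\<lambda>l. ?B k l) summable_on UNIV" for k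
    by (intro summable_on_cmult_right kernel_dominated_row(1)[OF comm_entry_dominated l2]
        A_entry_row_summable l2)+
  have OA: "(\<lambda>k. infsum (?A k) UNIV) summable_on UNIV"
    using A_entry_row_summable[OF l2_comm_matrix_op[OF l2], of j]
    unfolding matrix_op_def by (simp only: infsum_cmult_right')
  have OB: "(\<lambda>k. infsum (?B k) UNIV) summable_on UNIV"
    using kernel_dominated_row(1)[OF comm_entry_dominated l2_A_matrix_op[OF \<psi>], of j]
    unfolding matrix_op_def by (simp only: infsum_cmult_right')
  have "matrix_op A_entry (matrix_op comm_entry \<psi>) j - matrix_op comm_entry (matrix_op A_entry \<psi>) j
      = infsum (\<lambda>k. infsum (?A k) UNIV) UNIV - infsum (\<lambda>k. infsum (?B k) UNIV) UNIV"
    unfolding matrix_op_def by (simp only: infsum_cmult_right')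
  also have "\<dots> = infsum (\<lambda>k. infsum (\<lambda>l. ?A k l - ?B k l) UNIV) UNIV"
    by (simp only: infsum_diff[OF OA OB, symmetric] infsum_diff[OF SA SB])
  also have "\<dots> = infsum (\<lambda>l. infsum (\<lambda>k. ?A k l - ?B k l) UNIV) UNIV"
    by (rule infsum_swap_banach[OF second_commutator_terms_summable[OF \<psi>]])
  also have "\<dots> = matrix_op comm2_entry \<psi> j"
    unfolding matrix_op_def comm2_entry_def
    by (simp only: mult.assoc[symmetric] left_diff_distrib[symmetric] infsum_cmult_left')
  finally show ?thesis .
qed

lemma second_commutator_bound:
  assumes \<phi>: "\<phi> \<in> domX" and \<psi>: "\<psi> \<in> domX"
  shows "cmod (l2inner (matrix_op A_entry \<phi>) (matrix_op comm_entry \<psi>)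
           - l2inner \<phi> (matrix_op comm_entry (matrix_op A_entry \<psi>)))
         \<le> infsum comm2_kernel UNIV * l2norm \<phi> * l2norm \<psi>"
proof -
  have l2: "l2 \<phi>" "l2 \<psi>" using \<phi> \<psi> by (simp_all add: domX_l2)
  have "l2inner (matrix_op A_entry \<phi>) (matrix_op comm_entry \<psi>)
          - l2inner \<phi> (matrix_op comm_entry (matrix_op A_entry \<psi>))
      = l2inner \<phi> (matrix_op A_entry (matrix_op comm_entry \<psi>))
          - l2inner \<phi> (matrix_op comm_entry (matrix_op A_entry \<psi>))"
    using A_matrix_op_symmetric[OF \<phi> l2_comm_matrix_op[OF l2(2)]] by simp
  also have "\<dots> = l2inner \<phi> (matrix_op comm2_entry \<psi>)"
    unfolding second_commutator_pointwise[OF \<psi>, symmetric]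
    by (rule l2inner_diff_right[symmetric, OF l2(1) l2_A_matrix_op[OF comm_matrix_op_domX[OF \<psi>]]
          l2_comm_matrix_op[OF l2_A_matrix_op[OF \<psi>]]])
  finally have eq: "l2inner (matrix_op A_entry \<phi>) (matrix_op comm_entry \<psi>)
      - l2inner \<phi> (matrix_op comm_entry (matrix_op A_entry \<psi>)) = l2inner \<phi> (matrix_op comm2_entry \<psi>)" .
  have "l2 (matrix_op comm2_entry \<psi>)"
    using matrix_op_bounded(1)[OF comm2_entry_dominated] l2(2) unfolding bounded_op_def by blast
  hence "cmod (l2inner \<phi> (matrix_op comm2_entry \<psi>)) \<le> l2norm \<phi> * l2norm (matrix_op comm2_entry \<psi>)"
    by (rule norm_l2inner_le[OF l2(1)])
  also have "\<dots> \<le> l2norm \<phi> * (infsum comm2_kernel UNIV * l2norm \<psi>)"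
    by (intro mult_left_mono matrix_op_bounded(2)[OF comm2_entry_dominated l2(2)] l2norm_nonneg)
  finally show ?thesis unfolding eq by (simp add: mult_ac)
qed

lemma graphA_imp_eq_matrix_op:
  assumes "(f, g) \<in> graphA a"
  shows "g = matrix_op A_entry f"
proof
  fix k
  obtain \<phi> where \<phi>: "\<And>n. \<phi> n \<in> domX"
    and to_f: "(\<lambda>n. l2norm (\<lambda>k. \<phi> n k - f k)) \<longlonglongrightarrow> 0"
    and to_g: "(\<lambda>n. l2norm (\<lambda>k. A0 a (\<phi> n) k - g k)) \<longlonglongrightarrow> 0"
    and f: "l2 f" and g: "l2 g"
    using assms unfolding graphA_def by blast
  have "cmod (matrix_op A_entry (\<phi> n) k - g k) \<le> l2norm (\<lambda>k. A0 a (\<phi> n) k - g k)" for n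
    using norm_le_l2norm[OF l2_diff[OF l2_A_matrix_op[OF \<phi>] g], of n k]
    unfolding A0_eq_matrix_op by simp
  hence "(\<lambda>n. matrix_op A_entry (\<phi> n) k - g k) \<longlonglongrightarrow> 0"
    by (rule Lim_null_comparison[OF always_eventually[OF allI] to_g])
  hence to_gk: "(\<lambda>n. matrix_op A_entry (\<phi> n) k) \<longlonglongrightarrow> g k" by (simp add: LIM_zero_iff)
  define S where "S = infsum (\<lambda>n. (1 + real_of_int \<bar>k\<bar>) * A_kernel n) UNIV"
  have "cmod (matrix_op A_entry (\<phi> n) k - matrix_op A_entry f k) \<le> S * l2norm (\<lambda>k. \<phi> n k - f k)" for n
  proof -
    have d: "l2 (\<lambda>j. \<phi> n j - f j)" by (rule l2_diff[OF domX_l2[OF \<phi>] f])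
    have "matrix_op A_entry (\<phi> n) k - matrix_op A_entry f k
        = infsum (\<lambda>j. A_entry k j * \<phi> n j - A_entry k j * f j) UNIV"
      unfolding matrix_op_def
      by (rule infsum_diff[symmetric, OF A_entry_row_summable[OF domX_l2[OF \<phi>]] A_entry_row_summable[OF f]])
    also have "\<dots> = infsum (\<lambda>j. A_entry k j * (\<phi> n j - f j)) UNIV" by (simp add: right_diff_distrib)
    also have "cmod \<dots> \<le> kernel_conv (\<lambda>n. (1 + real_of_int \<bar>k\<bar>) * A_kernel n) (\<lambda>j. \<phi> n j - f j) k"
      by (rule infsum_le_kernel_conv(2)[OF A_kernel_row_l1 d]) (rule norm_A_entry_mult_le_row)
    also have "\<dots> \<le> S * l2norm (\<lambda>j. \<phi> n j - f j)" unfolding S_def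
      by (rule kernel_conv_le[OF A_kernel_row_l1 d])
    finally show ?thesis .
  qed
  hence "(\<lambda>n. matrix_op A_entry (\<phi> n) k - matrix_op A_entry f k) \<longlonglongrightarrow> 0"
    by (rule Lim_null_comparison[OF always_eventually[OF allI]])
       (use tendsto_mult[OF tendsto_const to_f, of S] in simp_all)
  hence "(\<lambda>n. matrix_op A_entry (\<phi> n) k) \<longlonglongrightarrow> matrix_op A_entry f k" by (simp add: LIM_zero_iff)
  with to_gk show "g k = matrix_op A_entry f k" by (rule LIMSEQ_unique)
qed

lemma Aop_eq_matrix_op:
  assumes "f \<in> domA a"
  shows "(f, matrix_op A_entry f) \<in> graphA a" and "Aop a f = matrix_op A_entry f"
proof -
  obtain g where fg: "(f, g) \<in> graphA a" using assms unfolding domA_def by blast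
  thus graph: "(f, matrix_op A_entry f) \<in> graphA a" by (simp only: graphA_imp_eq_matrix_op[OF fg, symmetric])
  show "Aop a f = matrix_op A_entry f"
    unfolding Aop_def
    by (rule the_equality[where P="\<lambda>g. (f, g) \<in> graphA a", OF graph]) (rule graphA_imp_eq_matrix_op)
qed

lemma domA_l2: "f \<in> domA a \<Longrightarrow> l2 f"
  using Aop_eq_matrix_op(1)[of f] unfolding graphA_def by (simp only: mem_Collect_eq prod.case)

lemma domA_approx:
  assumes "f \<in> domA a"
  obtains \<phi> where "\<And>n. \<phi> n \<in> domX" "l2_tendsto \<phi> f"
    "l2_tendsto (\<lambda>n. matrix_op A_entry (\<phi> n)) (matrix_op A_entry f)"
proof -
  obtain \<phi> where \<phi>: "\<And>n. \<phi> n \<in> domX"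
    and to_f: "(\<lambda>n. l2norm (\<lambda>k. \<phi> n k - f k)) \<longlonglongrightarrow> 0"
    and to_Af: "(\<lambda>n. l2norm (\<lambda>k. A0 a (\<phi> n) k - matrix_op A_entry f k)) \<longlonglongrightarrow> 0"
    and l2: "l2 f" "l2 (matrix_op A_entry f)"
    using Aop_eq_matrix_op(1)[OF assms] unfolding graphA_def by blast
  show ?thesis
  proof (rule that[OF \<phi>])
    show "l2_tendsto \<phi> f" unfolding l2_tendsto_def using \<phi> l2 to_f by (simp add: domX_l2)
    show "l2_tendsto (\<lambda>n. matrix_op A_entry (\<phi> n)) (matrix_op A_entry f)"
      unfolding l2_tendsto_def using \<phi> l2 to_Af by (simp add: l2_A_matrix_op A0_eq_matrix_op)
  qed
qed

text \<open>Both commutator estimates hold on \<open>D(X)\<close> and pass to \<open>D(A\<^sub>a)\<close> along graph-norm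
  approximations, since every term in them is continuous in the graph norm.\<close>

lemma Aop_commutator_identity:
  assumes \<phi>: "\<phi> \<in> domA a" and \<psi>: "\<psi> \<in> domA a"
  shows "l2inner (Aop a \<phi>) (Dop \<gamma> \<psi>) - l2inner \<phi> (Dop \<gamma> (Aop a \<psi>)) = l2inner \<phi> (matrix_op comm_entry \<psi>)"
proof -
  obtain p where p: "\<And>n. p n \<in> domX" "l2_tendsto p \<phi>"
    "l2_tendsto (\<lambda>n. matrix_op A_entry (p n)) (matrix_op A_entry \<phi>)"
    using domA_approx[OF \<phi>] by blast
  obtain q where q: "\<And>n. q n \<in> domX" "l2_tendsto q \<psi>"
    "l2_tendsto (\<lambda>n. matrix_op A_entry (q n)) (matrix_op A_entry \<psi>)"
    using domA_approx[OF \<psi>] by blast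
  have "(\<lambda>n. l2inner (p n) (matrix_op comm_entry (q n)))
      \<longlonglongrightarrow> l2inner (matrix_op A_entry \<phi>) (Dop \<gamma> \<psi>) - l2inner \<phi> (Dop \<gamma> (matrix_op A_entry \<psi>))"
    unfolding commutator_identity[OF p(1) q(1), symmetric]
    by (intro tendsto_diff l2inner_tendsto p q bounded_op_l2_tendsto[OF Dop_bounded])
  moreover have "(\<lambda>n. l2inner (p n) (matrix_op comm_entry (q n))) \<longlonglongrightarrow> l2inner \<phi> (matrix_op comm_entry \<psi>)"
    by (intro l2inner_tendsto p bounded_op_l2_tendsto[OF matrix_op_bounded(1)[OF comm_entry_dominated]] q)
  ultimately have "l2inner (matrix_op A_entry \<phi>) (Dop \<gamma> \<psi>) - l2inner \<phi> (Dop \<gamma> (matrix_op A_entry \<psi>))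
      = l2inner \<phi> (matrix_op comm_entry \<psi>)"
    by (rule LIMSEQ_unique)
  thus ?thesis unfolding Aop_eq_matrix_op(2)[OF \<phi>] Aop_eq_matrix_op(2)[OF \<psi>] .
qed

lemma Aop_second_commutator_bound:
  assumes \<phi>: "\<phi> \<in> domA a" and \<psi>: "\<psi> \<in> domA a"
  shows "cmod (l2inner (Aop a \<phi>) (matrix_op comm_entry \<psi>) - l2inner \<phi> (matrix_op comm_entry (Aop a \<psi>)))
    \<le> infsum comm2_kernel UNIV * l2norm \<phi> * l2norm \<psi>"
proof -
  obtain p where p: "\<And>n. p n \<in> domX" "l2_tendsto p \<phi>"
    "l2_tendsto (\<lambda>n. matrix_op A_entry (p n)) (matrix_op A_entry \<phi>)"
    using domA_approx[OF \<phi>] by blast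
  obtain q where q: "\<And>n. q n \<in> domX" "l2_tendsto q \<psi>"
    "l2_tendsto (\<lambda>n. matrix_op A_entry (q n)) (matrix_op A_entry \<psi>)"
    using domA_approx[OF \<psi>] by blast
  note comm_bounded = matrix_op_bounded(1)[OF comm_entry_dominated]
  have "(\<lambda>n. cmod (l2inner (matrix_op A_entry (p n)) (matrix_op comm_entry (q n))
        - l2inner (p n) (matrix_op comm_entry (matrix_op A_entry (q n)))))
      \<longlonglongrightarrow> cmod (l2inner (matrix_op A_entry \<phi>) (matrix_op comm_entry \<psi>)
        - l2inner \<phi> (matrix_op comm_entry (matrix_op A_entry \<psi>)))"
    by (intro tendsto_norm tendsto_diff l2inner_tendsto p q bounded_op_l2_tendsto[OF comm_bounded])
  moreover have "(\<lambda>n. infsum comm2_kernel UNIV * l2norm (p n) * l2norm (q n))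
      \<longlonglongrightarrow> infsum comm2_kernel UNIV * l2norm \<phi> * l2norm \<psi>"
    by (intro tendsto_mult tendsto_const l2norm_tendsto p q)
  ultimately have "cmod (l2inner (matrix_op A_entry \<phi>) (matrix_op comm_entry \<psi>)
        - l2inner \<phi> (matrix_op comm_entry (matrix_op A_entry \<psi>)))
      \<le> infsum comm2_kernel UNIV * l2norm \<phi> * l2norm \<psi>"
    by (rule LIMSEQ_le) (use second_commutator_bound[OF p(1) q(1)] in blast)
  thus ?thesis using Aop_eq_matrix_op(2)[OF \<phi>] Aop_eq_matrix_op(2)[OF \<psi>] by simp
qed

lemma C2_Aop_Dop: "C2 (Aop a) (domA a) (Dop \<gamma>)"
proof -
  note comm_bounded = matrix_op_bounded[OF comm_entry_dominated]
  have "cmod (l2inner (Aop a \<phi>) (Dop \<gamma> \<psi>) - l2inner \<phi> (Dop \<gamma> (Aop a \<psi>)))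
      \<le> infsum comm_kernel UNIV * l2norm \<phi> * l2norm \<psi>" if "\<phi> \<in> domA a" "\<psi> \<in> domA a" for \<phi> \<psi>
  proof -
    have l2: "l2 \<phi>" "l2 \<psi>" using that by (simp_all add: domA_l2)
    have "cmod (l2inner \<phi> (matrix_op comm_entry \<psi>)) \<le> l2norm \<phi> * (infsum comm_kernel UNIV * l2norm \<psi>)"
      by (rule order.trans[OF norm_l2inner_le[OF l2(1) l2_comm_matrix_op[OF l2(2)]]])
         (intro mult_left_mono comm_bounded(2) l2 l2norm_nonneg)
    thus ?thesis unfolding Aop_commutator_identity[OF that] by (simp add: mult_ac)
  qed
  hence "C1 (Aop a) (domA a) (Dop \<gamma>)" unfolding C1_def using Dop_bounded by blast
  moreover have "is_adA (Aop a) (domA a) (Dop \<gamma>) (matrix_op comm_entry)"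
    unfolding is_adA_def using comm_bounded(1) Aop_commutator_identity by simp
  moreover have "C1 (Aop a) (domA a) (matrix_op comm_entry)"
    unfolding C1_def using comm_bounded(1) Aop_second_commutator_bound by blast
  ultimately show ?thesis unfolding C2_def by blast
qed

end

lemma SUP_norm_nonneg:
  fixes h :: "'a \<Rightarrow> 'b::real_normed_vector"
  shows "(SUP k. ereal (norm (h k))) \<ge> 0"
proof -
  have "ereal (norm (h undefined)) \<le> (SUP k. ereal (norm (h k)))" by (rule SUP_upper) simp
  thus ?thesis by (rule order.trans[rotated]) simp
qed

lemma q_nonneg: "q n \<gamma> \<ge> 0"
  by (induction n) (simp_all add: SUP_norm_nonneg)

lemma q_mono: "m \<le> n \<Longrightarrow> q m \<gamma> \<le> q n \<gamma>"
  by (induction n rule: dec_induct) (auto intro: order.trans add_increasing2 SUP_norm_nonneg)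

lemma q_finite_imp_bounded:
  assumes "q (Suc n) \<gamma> < \<infinity>"
  obtains C where "\<And>k. cmod (of_int k ^ Suc n * (Delta ^^ Suc n) \<gamma> k) \<le> C"
proof -
  let ?S = "SUP k. ereal (cmod (of_int k ^ Suc n * (Delta ^^ Suc n) \<gamma> k))"
  have S0: "?S \<ge> 0" by (rule SUP_norm_nonneg)
  have "?S \<le> q (Suc n) \<gamma>" using q_nonneg[of n \<gamma>] by (simp add: add_increasing)
  hence "?S < \<infinity>" using assms by (rule le_less_trans)
  hence "\<bar>?S\<bar> \<noteq> \<infinity>" unfolding abs_ereal_ge0[OF S0] by (rule less_imp_neq)
  hence S: "?S = ereal (real_of_ereal ?S)" by (rule ereal_real'[symmetric])
  show ?thesis
  proof (rule that)
    fix k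
    have "ereal (cmod (of_int k ^ Suc n * (Delta ^^ Suc n) \<gamma> k)) \<le> ?S" by (rule SUP_upper) simp
    thus "cmod (of_int k ^ Suc n * (Delta ^^ Suc n) \<gamma> k) \<le> real_of_ereal ?S" by (subst (asm) S) simp
  qed
qed

theorem mainTheorem9:
  fixes a :: real and \<gamma> :: "int \<Rightarrow> complex"
  assumes "a > 1"
    and "bounded (range \<gamma>)"
    and "q 2 \<gamma> < \<infinity>"
  shows "C2 (Aop a) (domA a) (Dop \<gamma>)"
proof -
  obtain G where G: "\<And>k. cmod (\<gamma> k) \<le> G" using assms(2) unfolding bounded_iff by auto
  have q1: "q (Suc 0) \<gamma> < \<infinity>" by (rule le_less_trans[OF q_mono assms(3)]) simp
  obtain B1 where B1: "\<And>k. cmod (of_int k ^ Suc 0 * (Delta ^^ Suc 0) \<gamma> k) \<le> B1"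
    using q_finite_imp_bounded[OF q1] by blast
  have q2: "q (Suc 1) \<gamma> < \<infinity>" by (rule le_less_trans[OF q_mono assms(3)]) simp
  obtain B2 where B2: "\<And>k. cmod (of_int k ^ Suc 1 * (Delta ^^ Suc 1) \<gamma> k) \<le> B2"
    using q_finite_imp_bounded[OF q2] by blast
  interpret commutator_setting \<gamma> G B1 B2 a
    by unfold_locales (use G B1 B2 assms(1) in \<open>simp_all add: numeral_2_eq_2\<close>)
  show ?thesis by (rule C2_Aop_Dop)
qed

end
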